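(* For every rewb $\alpha\in\mathrm{REWB}$ over a finite alphabet $\Sigma$, there exists a one-way nondeterministic nested stack automaton $A_\alpha$ with $L(A_\alpha)=L(\alpha)$.
   Context: Fix a finite alphabet $\Sigma$. For $k\ge1$, $[k]=\{1,\dots,k\}$, $B_k=\{[_i,\,]_i:i\in[k]\}$ fresh brackets. $g$ is the homomorphism fixing letters of $\Sigma$ and erasing brackets. Rewbs: $\mathrm{REWB}_k$ and $\mathrm{var}(\alpha)$ defined inductively: $a\in\Sigma\cup\{\varepsilon\}$ ($\mathrm{var}=\emptyset$); $\backslash i$, $i\in[k]$ ($\mathrm{var}=\{i\}$); $\alpha_0\alpha_1$, $\alpha_0+\alpha_1$ (union of vars); $\alpha_0^\ast$; $(_j\alpha_0)_j$ for $j\in[k]\setminus\mathrm{var}(\alpha_0)$ (var gains $j$). Labels may be repeated on different captures. $\mathrm{REWB}_0$ is the set of ordinary regular expressions and $\mathrm{REWB}=\bigcup_{k\ge0}\mathrm{REWB}_k$. $\mathcal{R}_k(\alpha)$ is the regular language over $\Sigma\uplus B_k\uplus[k]$ obtained reading $\alpha$ as a regular expression with $\backslash i$ as the letter $i$ and $(_i\alpha_0)_i$ as $[_i\,\mathcal{R}_k(\alpha_0)\,]_i$. Dereferencing $\mathcal{D}_k$: repeatedly take the leftmost number $i\in[k]$ in the current string; if no $[_i$ lies to its left, delete this $i$; otherwise take the nearest $[_i$ to its left; if no $]_i$ lies between them the result is undefined; otherwise replace this $i$ by $g(u)$, $u$ the string strictly between that $[_i$ and the first $]_i$ after it; when no numbers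 remain, delete all brackets. $L(\alpha)=\{\mathcal{D}_k(v):v\in\mathcal{R}_k(\alpha)\}$ (for $k=0$, the usual regular language). Automata: a one-way nondeterministic stack automaton (SA) has finite states, a start state, final states, a one-way read-only input (each move reads the current input symbol and either leaves the cursor or advances it), and a stack over a finite alphabet $\Gamma$ with initial symbol $Z_0$, delimited by a bottom marker $\#$ and top marker $\$$. A stack pointer may move left/right within the stack and the machine reads the symbol under it (and can detect bottom/top); only when the pointer is on the top symbol $Z$ may it replace $Z$ by any $w\in\Gamma^\ast$ (pointer then at the new top). It accepts an input if some run consumes all of it and ends in a final state. A nested stack automaton (NSA, Aho 1969) additionally may, at any scanned stack position, create a new substack $¢\,w\,\$$ ($w\in\Gamma^\ast$) inserted just below the scanned symbol, with the pointer moved to the top of the new substack; thereafter the pointer may only move within the part of the stack from $\#$ up to the top of the innermost substack, pushing/popping is allowed only at that top, and an empty innermost substack $¢\$$ may be destroyed, after which the pointer is on the symbol just above where it was. *)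

theory Defs
  imports Main
begin

datatype 'a rewb =
    RSym 'a
  | REps
  | RRef nat
  | RCat "'a rewb" "'a rewb"
  | RAlt "'a rewb" "'a rewb"
  | RStar "'a rewb"
  | RCap nat "'a rewb"

fun rvars :: "'a rewb \<Rightarrow> nat set" where
  "rvars (RSym a) = {}"
| "rvars REps = {}"
| "rvars (RRef i) = {i}"
| "rvars (RCat a b) = rvars a \<union> rvars b"
| "rvars (RAlt a b) = rvars a \<union> rvars b"
| "rvars (RStar a) = rvars a"
| "rvars (RCap j a) = insert j (rvars a)"

fun rewb_k :: "nat \<Rightarrow> 'a rewb \<Rightarrow> bool" where
  "rewb_k k (RSym a) = True"
| "rewb_k k REps = True"
| "rewb_k k (RRef i) = (1 \<le> i \<and> i \<le> k)"
| "rewb_k k (RCat a b) = (rewb_k k a \<and> rewb_k k b)"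
| "rewb_k k (RAlt a b) = (rewb_k k a \<and> rewb_k k b)"
| "rewb_k k (RStar a) = rewb_k k a"
| "rewb_k k (RCap j a) = (1 \<le> j \<and> j \<le> k \<and> j \<notin> rvars a \<and> rewb_k k a)"

text \<open>Symbols of Sigma + B_k + [k]: letters, brackets [_i, ]_i, numbers i.\<close>
datatype 'a sym = Ch 'a | Opn nat | Cls nat | Num nat

inductive_set kstar :: "'b list set \<Rightarrow> 'b list set" for A where
  kstar_nil: "[] \<in> kstar A"
| kstar_app: "u \<in> A \<Longrightarrow> v \<in> kstar A \<Longrightarrow> u @ v \<in> kstar A"

text \<open>The regular language R_k(alpha) (it does not depend on k).\<close>
fun rlang :: "'a rewb \<Rightarrow> 'a sym list set" where
  "rlang (RSym a) = {[Ch a]}"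
| "rlang REps = {[]}"
| "rlang (RRef i) = {[Num i]}"
| "rlang (RCat a b) = {u @ v |u v. u \<in> rlang a \<and> v \<in> rlang b}"
| "rlang (RAlt a b) = rlang a \<union> rlang b"
| "rlang (RStar a) = kstar (rlang a)"
| "rlang (RCap j a) = {[Opn j] @ u @ [Cls j] |u. u \<in> rlang a}"

definition gh :: "'a sym list \<Rightarrow> 'a list" where
  "gh xs = concat (map (\<lambda>x. case x of Ch a \<Rightarrow> [a] | _ \<Rightarrow> []) xs)"

text \<open>Dereferencing, processing the leftmost number each time. The first argument
  is the already processed prefix (which contains no numbers), the second the rest.\<close>
fun deref_aux :: "'a sym list \<Rightarrow> 'a sym list \<Rightarrow> 'a list option" where
  "deref_aux p [] = Some (gh p)"
| "deref_aux p (Num i # r) =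
     (if Opn i \<notin> set p then deref_aux p r
      else (let p2 = rev (takeWhile (\<lambda>x. x \<noteq> Opn i) (rev p)) in
            if Cls i \<notin> set p2 then None
            else deref_aux (p @ map Ch (gh (takeWhile (\<lambda>x. x \<noteq> Cls i) p2))) r))"
| "deref_aux p (x # r) = deref_aux (p @ [x]) r"

definition deref :: "'a sym list \<Rightarrow> 'a list option" where
  "deref v = deref_aux [] v"

definition rewb_lang :: "'a rewb \<Rightarrow> 'a list set" where
  "rewb_lang \<alpha> = {w. \<exists>v \<in> rlang \<alpha>. deref v = Some w}"

text \<open>Stack cells: bottom marker #, stack symbol, substack start marker cent, top marker $.\<close>
datatype 'g cell = SBot | SCell 'g | SCent | STop

datatype 'g sact =
    AStay | ALeft | ARight
  | AReplace "'g list"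
  | ACreate "'g list"
  | ADestroy

fun sact_syms :: "'g sact \<Rightarrow> 'g set" where
  "sact_syms (AReplace w) = set w"
| "sact_syms (ACreate w) = set w"
| "sact_syms _ = {}"

fun cell_syms :: "'g cell \<Rightarrow> 'g set" where
  "cell_syms (SCell g) = {g}"
| "cell_syms _ = {}"

text \<open>A transition (q, x, c, q', adv, act): in state q, with current input symbol x
  (None = end of input) and scanned stack cell c, go to q', advance the input cursor
  iff adv, and perform stack action act.\<close>
record 'a nsa =
  nsa_states :: "nat set"
  nsa_gamma  :: "nat set"
  nsa_delta  :: "(nat \<times> 'a option \<times> nat cell \<times> nat \<times> bool \<times> nat sact) set"
  nsa_init   :: nat
  nsa_Z0     :: nat
  nsa_final  :: "nat set"

definition is_nsa :: "'a nsa \<Rightarrow> bool" where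
  "is_nsa A \<longleftrightarrow> finite (nsa_states A) \<and> finite (nsa_gamma A) \<and> finite (nsa_delta A)
     \<and> nsa_init A \<in> nsa_states A \<and> nsa_Z0 A \<in> nsa_gamma A \<and> nsa_final A \<subseteq> nsa_states A
     \<and> (\<forall>(q, x, c, q', adv, act) \<in> nsa_delta A.
          q \<in> nsa_states A \<and> q' \<in> nsa_states A \<and> cell_syms c \<subseteq> nsa_gamma A
          \<and> sact_syms act \<subseteq> nsa_gamma A)"

text \<open>Index of the top marker of the innermost substack (= first top marker).\<close>
definition top_idx :: "'g cell list \<Rightarrow> nat" where
  "top_idx s = length (takeWhile (\<lambda>c. c \<noteq> STop) s)"

fun stack_move :: "'g cell list \<times> nat \<Rightarrow> 'g sact \<Rightarrow> 'g cell list \<times> nat \<Rightarrow> bool" where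
  "stack_move (s, n) AStay (s', n') \<longleftrightarrow> n \<le> top_idx s \<and> s' = s \<and> n' = n"
| "stack_move (s, n) ALeft (s', n') \<longleftrightarrow> 0 < n \<and> n \<le> top_idx s \<and> s' = s \<and> n' = n - 1"
| "stack_move (s, n) ARight (s', n') \<longleftrightarrow> n < top_idx s \<and> s' = s \<and> n' = n + 1"
| "stack_move (s, n) (AReplace w) (s', n') \<longleftrightarrow>
     0 < n \<and> n + 1 = top_idx s \<and> (\<exists>Z. s ! n = SCell Z)
     \<and> s' = take n s @ map SCell w @ drop (top_idx s) s \<and> n' = n + length w - 1"
| "stack_move (s, n) (ACreate w) (s', n') \<longleftrightarrow>
     0 < n \<and> n < top_idx s
     \<and> s' = take n s @ [SCent] @ map SCell w @ [STop] @ drop n s \<and> n' = n + length w"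
| "stack_move (s, n) ADestroy (s', n') \<longleftrightarrow>
     0 < n \<and> n + 1 = top_idx s \<and> top_idx s < length s \<and> s ! n = SCent
     \<and> s' = take n s @ drop (top_idx s + 1) s \<and> n' = n"

type_synonym ('a, 'g) nconf = "nat \<times> 'a list \<times> 'g cell list \<times> nat"

definition nsa_step :: "'a nsa \<Rightarrow> ('a, nat) nconf \<Rightarrow> ('a, nat) nconf \<Rightarrow> bool" where
  "nsa_step A C C' \<longleftrightarrow>
     (case (C, C') of ((q, w, s, n), (q', w', s', n')) \<Rightarrow>
       n < length s \<and>
       (\<exists>x adv act. (q, x, s ! n, q', adv, act) \<in> nsa_delta A
          \<and> x = (case w of [] \<Rightarrow> None | a # _ \<Rightarrow> Some a)
          \<and> (adv \<longrightarrow> w \<noteq> []) \<and> w' = (if adv then tl w else w)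
          \<and> stack_move (s, n) act (s', n')))"

definition nsa_lang :: "'a nsa \<Rightarrow> 'a list set" where
  "nsa_lang A = {w. \<exists>q s n. (nsa_step A)\<^sup>*\<^sup>* (nsa_init A, w, [SBot, SCell (nsa_Z0 A), STop], 1)
                                              (q, [], s, n) \<and> q \<in> nsa_final A}"

end

theory Submission
  imports Defs "HOL-Library.Countable"
begin

text \<open>
  The automaton guesses a word v of R_k(\<alpha>) symbol by symbol along a leftmost derivation
  of \<alpha>, whose pending part (subexpressions and closing brackets, from a finite set) is
  kept in the finite control, and writes v onto its stack while matching the letters of v
  against the input. For a backreference i it walks down to the nearest open bracket of i
  and reads rightwards up to the matching close bracket, matching the letters it passes.
  A backreference j met while reading is resolved recursively: a substack created just
  below it remembers i, and reading resumes behind it afterwards. Since dereferencing never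
  rewrites the stack, what is computed is a positional reformulation of dereferencing,
  proved equal to deref. Soundness is an invariant of all runs; completeness is a
  construction of accepting runs following the same recursion.
\<close>

section \<open>Automata over countable states and stack symbols\<close>

fun map_cell :: "('g \<Rightarrow> 'h) \<Rightarrow> 'g cell \<Rightarrow> 'h cell" where
  "map_cell f (SCell g) = SCell (f g)"
| "map_cell f SBot = SBot"
| "map_cell f SCent = SCent"
| "map_cell f STop = STop"

fun map_sact :: "('g \<Rightarrow> 'h) \<Rightarrow> 'g sact \<Rightarrow> 'h sact" where
  "map_sact f (AReplace w) = AReplace (map f w)"
| "map_sact f (ACreate w) = ACreate (map f w)"
| "map_sact f AStay = AStay"
| "map_sact f ALeft = ALeft"
| "map_sact f ARight = ARight"
| "map_sact f ADestroy = ADestroy"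

lemma map_cell_eq_iff: "inj f \<Longrightarrow> map_cell f c = map_cell f d \<longleftrightarrow> c = d"
  by (cases c; cases d) (auto dest: injD)

lemma map_cell_eq_simps [simp]:
  "map_cell f c = STop \<longleftrightarrow> c = STop"
  "map_cell f c = SBot \<longleftrightarrow> c = SBot"
  "map_cell f c = SCent \<longleftrightarrow> c = SCent"
  "map_cell f c = SCell z \<longleftrightarrow> (\<exists>g. c = SCell g \<and> z = f g)"
  by (cases c; auto)+

lemma top_idx_map_cell [simp]: "top_idx (map (map_cell f) s) = top_idx s"
  unfolding top_idx_def by (induct s) auto

lemma top_idx_le_length: "top_idx s \<le> length s"
  unfolding top_idx_def by (rule length_takeWhile_le)

lemma top_idx_less_length_iff: "top_idx s < length s \<longleftrightarrow> STop \<in> set s"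
  unfolding top_idx_def by (induct s) auto

lemma top_idx_append_STop: "STop \<notin> set xs \<Longrightarrow> top_idx (xs @ STop # ys) = length xs"
  unfolding top_idx_def by (induct xs) auto

lemma stack_move_deterministic:
  "stack_move (s, n) a (s1, n1) \<Longrightarrow> stack_move (s, n) a (s2, n2) \<Longrightarrow> s1 = s2 \<and> n1 = n2"
  by (cases a) auto

lemma stack_move_map_cell:
  assumes "inj f"
  shows "stack_move (map (map_cell f) s, n) (map_sact f a) (t, n') \<longleftrightarrow>
         (\<exists>s'. t = map (map_cell f) s' \<and> stack_move (s, n) a (s', n'))"
proof (cases a)
  case (AReplace w)
  have "n < length s" if "n + 1 = top_idx s"
    using that top_idx_le_length[of s] by linarith
  then show ?thesis
    by (auto simp: AReplace take_map drop_map
        intro!: exI[of _ "take n s @ map SCell w @ drop (top_idx s) s"])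
next
  case ADestroy
  then show ?thesis
    by (auto simp: take_map drop_map intro!: exI[of _ "take n s @ drop (top_idx s + 1) s"])
qed (auto simp: take_map drop_map)

text \<open>
  The construction uses structured datatypes of states and stack symbols, whereas the
  record nsa fixes both to be naturals; automata over countable types are transported along
  the injection to_nat.
\<close>

type_synonym ('s, 'a, 'g) trans = "'s \<times> 'a option \<times> 'g cell \<times> 's \<times> bool \<times> 'g sact"

type_synonym ('s, 'a, 'g) conf = "'s \<times> 'a list \<times> 'g cell list \<times> nat"

definition trans_step :: "('s, 'a, 'g) trans set \<Rightarrow> ('s, 'a, 'g) conf \<Rightarrow> ('s, 'a, 'g) conf \<Rightarrow> bool" where
  "trans_step D C C' \<longleftrightarrow>
     (case (C, C') of ((q, w, s, n), (q', w', s', n')) \<Rightarrow>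
       n < length s \<and>
       (\<exists>x adv act. (q, x, s ! n, q', adv, act) \<in> D
          \<and> x = (case w of [] \<Rightarrow> None | a # _ \<Rightarrow> Some a)
          \<and> (adv \<longrightarrow> w \<noteq> []) \<and> w' = (if adv then tl w else w)
          \<and> stack_move (s, n) act (s', n')))"

definition trans_lang :: "('s, 'a, 'g) trans set \<Rightarrow> 's \<Rightarrow> 'g \<Rightarrow> 's set \<Rightarrow> 'a list set" where
  "trans_lang D q0 z F =
     {w. \<exists>q s n. (trans_step D)\<^sup>*\<^sup>* (q0, w, [SBot, SCell z, STop], 1) (q, [], s, n) \<and> q \<in> F}"

definition enc_trans :: "('s::countable, 'a, 'g::countable) trans \<Rightarrow> (nat, 'a, nat) trans" where
  "enc_trans t = (case t of (q, x, c, q', adv, act) \<Rightarrow>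
     (to_nat q, x, map_cell to_nat c, to_nat q', adv, map_sact to_nat act))"

definition enc_conf :: "('s::countable, 'a, 'g::countable) conf \<Rightarrow> (nat, 'a, nat) conf" where
  "enc_conf C = (case C of (q, w, s, n) \<Rightarrow> (to_nat q, w, map (map_cell to_nat) s, n))"

definition nsa_of :: "'s::countable set \<Rightarrow> 'g::countable set \<Rightarrow> ('s, 'a, 'g) trans set \<Rightarrow>
    's \<Rightarrow> 'g \<Rightarrow> 's set \<Rightarrow> 'a nsa" where
  "nsa_of Q G D q0 z F = \<lparr>nsa_states = to_nat ` Q, nsa_gamma = to_nat ` G, nsa_delta = enc_trans ` D,
     nsa_init = to_nat q0, nsa_Z0 = to_nat z, nsa_final = to_nat ` F\<rparr>"

lemma enc_trans_mem_iff:
  "(to_nat q, x, map_cell to_nat c, q', adv, act) \<in> enc_trans ` D \<longleftrightarrow>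
   (\<exists>q'' act'. q' = to_nat q'' \<and> act = map_sact to_nat act' \<and> (q, x, c, q'', adv, act') \<in> D)"
  by (force simp: enc_trans_def map_cell_eq_iff split: prod.splits)

lemma nsa_step_nsa_of_iff:
  "nsa_step (nsa_of Q G D q0 z F) (enc_conf C) C' \<longleftrightarrow> (\<exists>C''. C' = enc_conf C'' \<and> trans_step D C C'')"
proof -
  obtain q w s n where C: "C = (q, w, s, n)" by (cases C)
  obtain q' w' s' n' where C': "C' = (q', w', s', n')" by (cases C')
  let ?x = "case w of [] \<Rightarrow> None | a # _ \<Rightarrow> Some a"
  have "nsa_step (nsa_of Q G D q0 z F) (enc_conf C) C' \<longleftrightarrow>
      n < length s \<and> (\<exists>adv act. (to_nat q, ?x, map_cell to_nat (s ! n), q', adv, act) \<in> enc_trans ` D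
        \<and> (adv \<longrightarrow> w \<noteq> []) \<and> w' = (if adv then tl w else w)
        \<and> stack_move (map (map_cell to_nat) s, n) act (s', n'))"
    by (auto simp: nsa_step_def C C' enc_conf_def nsa_of_def)
  also have "\<dots> \<longleftrightarrow> n < length s \<and> (\<exists>q'' s'' adv act. q' = to_nat q'' \<and> s' = map (map_cell to_nat) s''
        \<and> (q, ?x, s ! n, q'', adv, act) \<in> D
        \<and> (adv \<longrightarrow> w \<noteq> []) \<and> w' = (if adv then tl w else w) \<and> stack_move (s, n) act (s'', n'))"
    (is "?l \<longleftrightarrow> ?r")
  proof
    assume ?l
    then obtain adv q'' act' where "n < length s" "q' = to_nat q''" "(q, ?x, s ! n, q'', adv, act') \<in> D"
      "adv \<longrightarrow> w \<noteq> []" "w' = (if adv then tl w else w)"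
      "stack_move (map (map_cell to_nat) s, n) (map_sact to_nat act') (s', n')"
      unfolding enc_trans_mem_iff by blast
    then show ?r unfolding stack_move_map_cell[OF inj_to_nat] by blast
  next
    assume ?r
    then show ?l unfolding enc_trans_mem_iff
      by (blast intro: stack_move_map_cell[OF inj_to_nat, THEN iffD2])
  qed
  also have "\<dots> \<longleftrightarrow> (\<exists>C''. C' = enc_conf C'' \<and> trans_step D C C'')"
    by (auto simp: trans_step_def C C' enc_conf_def)
  finally show ?thesis .
qed

lemma nsa_steps_nsa_of_decode:
  "(nsa_step (nsa_of Q G D q0 z F))\<^sup>*\<^sup>* (enc_conf C) C' \<Longrightarrow>
   \<exists>C''. C' = enc_conf C'' \<and> (trans_step D)\<^sup>*\<^sup>* C C''"
proof (induct rule: rtranclp_induct)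
  case (step y z)
  then show ?case by (metis nsa_step_nsa_of_iff rtranclp.rtrancl_into_rtrancl)
qed blast

lemma nsa_steps_nsa_of_encode:
  "(trans_step D)\<^sup>*\<^sup>* C C'' \<Longrightarrow> (nsa_step (nsa_of Q G D q0 z F))\<^sup>*\<^sup>* (enc_conf C) (enc_conf C'')"
proof (induct rule: rtranclp_induct)
  case (step y z)
  then show ?case by (metis nsa_step_nsa_of_iff rtranclp.rtrancl_into_rtrancl)
qed simp

lemma nsa_lang_nsa_of: "nsa_lang (nsa_of Q G D q0 z F) = trans_lang D q0 z F"
proof -
  have init: "enc_conf (q0, w, [SBot, SCell z, STop], 1) =
      (nsa_init (nsa_of Q G D q0 z F), w, [SBot, SCell (nsa_Z0 (nsa_of Q G D q0 z F)), STop], 1)" for w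
    by (simp add: enc_conf_def nsa_of_def)
  have final: "to_nat q \<in> nsa_final (nsa_of Q G D q0 z F) \<longleftrightarrow> q \<in> F" for q
    by (simp add: nsa_of_def inj_image_mem_iff)
  show ?thesis
  proof (intro set_eqI iffI)
    fix w assume "w \<in> nsa_lang (nsa_of Q G D q0 z F)"
    then obtain q s n where run: "(nsa_step (nsa_of Q G D q0 z F))\<^sup>*\<^sup>* (enc_conf (q0, w, [SBot, SCell z, STop], 1)) (q, [], s, n)"
      and "q \<in> nsa_final (nsa_of Q G D q0 z F)"
      unfolding nsa_lang_def init by blast
    with nsa_steps_nsa_of_decode[OF run] show "w \<in> trans_lang D q0 z F"
      by (force simp: trans_lang_def enc_conf_def final split: prod.splits)
  next
    fix w assume "w \<in> trans_lang D q0 z F"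
    then obtain q s n where "(trans_step D)\<^sup>*\<^sup>* (q0, w, [SBot, SCell z, STop], 1) (q, [], s, n)" "q \<in> F"
      by (auto simp: trans_lang_def)
    then show "w \<in> nsa_lang (nsa_of Q G D q0 z F)"
      unfolding nsa_lang_def init[symmetric]
      by (force dest: nsa_steps_nsa_of_encode simp: enc_conf_def final[symmetric])
  qed
qed

definition cells_of :: "'g set \<Rightarrow> 'g cell set" where
  "cells_of G = {SBot, SCent, STop} \<union> SCell ` G"

lemma is_nsa_nsa_of:
  assumes "finite Q" "finite G" "finite D" "q0 \<in> Q" "z \<in> G" "F \<subseteq> Q"
    and "\<And>q x c q' adv act. (q, x, c, q', adv, act) \<in> D \<Longrightarrow>
      q \<in> Q \<and> q' \<in> Q \<and> cell_syms c \<subseteq> G \<and> sact_syms act \<subseteq> G"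
  shows "is_nsa (nsa_of Q G D q0 z F)"
  using assms unfolding is_nsa_def nsa_of_def
  apply (auto simp: enc_trans_def)
  subgoal for q x c q' adv act by (cases c) fastforce+
  subgoal for q x c q' adv act by (cases act) fastforce+
  done

section \<open>Derivations of R_k(\<alpha>)\<close>

text \<open>
  A todo list is what remains of a leftmost derivation: expressions still to be expanded
  and closing brackets still to be emitted. Each step emits at most one symbol.
\<close>

datatype 'a item = Exp "'a rewb" | Close nat

inductive todo_step :: "'a item list \<Rightarrow> 'a sym list \<Rightarrow> 'a item list \<Rightarrow> bool" where
  step_sym: "todo_step (Exp (RSym a) # r) [Ch a] r"
| step_eps: "todo_step (Exp REps # r) [] r"
| step_ref: "todo_step (Exp (RRef i) # r) [Num i] r"
| step_cat: "todo_step (Exp (RCat a b) # r) [] (Exp a # Exp b # r)"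
| step_alt1: "todo_step (Exp (RAlt a b) # r) [] (Exp a # r)"
| step_alt2: "todo_step (Exp (RAlt a b) # r) [] (Exp b # r)"
| step_star_stop: "todo_step (Exp (RStar a) # r) [] r"
| step_star_unfold: "todo_step (Exp (RStar a) # r) [] (Exp a # Exp (RStar a) # r)"
| step_cap: "todo_step (Exp (RCap j a) # r) [Opn j] (Exp a # Close j # r)"
| step_close: "todo_step (Close j # r) [Cls j] r"

inductive todo_steps :: "'a item list \<Rightarrow> 'a sym list \<Rightarrow> 'a item list \<Rightarrow> bool" where
  steps_refl: "todo_steps r [] r"
| steps_step: "todo_step r u r' \<Longrightarrow> todo_steps r' v r'' \<Longrightarrow> todo_steps r (u @ v) r''"

lemma todo_step_length: "todo_step r u r' \<Longrightarrow> length u \<le> 1"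
  by (induct rule: todo_step.induct) auto

lemma todo_steps_trans: "todo_steps r u r' \<Longrightarrow> todo_steps r' v r'' \<Longrightarrow> todo_steps r (u @ v) r''"
  by (induct rule: todo_steps.induct) (auto intro: todo_steps.intros)

lemma todo_steps_snoc: "todo_steps r u r' \<Longrightarrow> todo_step r' e r'' \<Longrightarrow> todo_steps r (u @ e) r''"
  using todo_steps_trans steps_step[OF _ steps_refl] by fastforce

lemma todo_step_todo_steps: "todo_step r u r' \<Longrightarrow> todo_steps r u r'"
  using steps_step[OF _ steps_refl] by fastforce

fun todo_lang :: "'a item list \<Rightarrow> 'a sym list set" where
  "todo_lang [] = {[]}"
| "todo_lang (Exp a # r) = {u @ v |u v. u \<in> rlang a \<and> v \<in> todo_lang r}"
| "todo_lang (Close j # r) = {Cls j # v |v. v \<in> todo_lang r}"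

lemma todo_steps_Exp: "u \<in> rlang a \<Longrightarrow> todo_steps (Exp a # r) u r"
proof (induct a arbitrary: u r)
  case (RCat a b)
  then obtain u1 u2 where "u = u1 @ u2" "u1 \<in> rlang a" "u2 \<in> rlang b" by auto
  with RCat.hyps have "todo_steps (Exp a # Exp b # r) u r"
    using todo_steps_trans by blast
  then show ?case using steps_step[OF step_cat] by fastforce
next
  case (RAlt a b)
  then show ?case using steps_step[OF step_alt1] steps_step[OF step_alt2] by fastforce
next
  case (RStar a)
  from RStar.prems have "u \<in> kstar (rlang a)" by simp
  then show ?case
  proof (induct rule: kstar.induct)
    case kstar_nil
    then show ?case using todo_step_todo_steps[OF step_star_stop] by blast
  next
    case (kstar_app u v)
    then have "todo_steps (Exp a # Exp (RStar a) # r) (u @ v) r"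
      using RStar.hyps todo_steps_trans by blast
    then show ?case using steps_step[OF step_star_unfold] by fastforce
  qed
next
  case (RCap j a)
  then obtain v where u: "u = [Opn j] @ v @ [Cls j]" "v \<in> rlang a" by auto
  with RCap.hyps have "todo_steps (Exp a # Close j # r) (v @ [Cls j]) r"
    using todo_steps_snoc step_close by blast
  then show ?case using steps_step[OF step_cap] u by fastforce
qed (auto intro: todo_step_todo_steps todo_step.intros)

lemma todo_step_todo_lang: "todo_step r e r' \<Longrightarrow> v \<in> todo_lang r' \<Longrightarrow> e @ v \<in> todo_lang r"
proof (induct rule: todo_step.induct)
  case (step_cat a b r)
  then obtain v1 v2 v3 where "v = v1 @ v2 @ v3" "v1 \<in> rlang a" "v2 \<in> rlang b" "v3 \<in> todo_lang r"
    by auto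
  then show ?case by simp (metis (mono_tags, lifting) append.assoc mem_Collect_eq)
next
  case (step_star_stop a r)
  then show ?case by simp (metis append_Nil kstar.kstar_nil)
next
  case (step_star_unfold a r)
  then obtain v1 v2 v3 where "v = v1 @ v2 @ v3" "v1 \<in> rlang a" "v2 \<in> kstar (rlang a)" "v3 \<in> todo_lang r"
    by auto
  moreover from this have "v1 @ v2 \<in> kstar (rlang a)" by (auto intro: kstar.intros)
  ultimately show ?case by simp (metis append.assoc)
next
  case (step_cap j a r)
  then obtain v1 v2 where "v = v1 @ Cls j # v2" "v1 \<in> rlang a" "v2 \<in> todo_lang r" by auto
  then show ?case by simp (rule exI[of _ "Opn j # v1 @ [Cls j]"], auto)
qed force+

lemma todo_steps_todo_lang: "todo_steps r u [] \<Longrightarrow> u \<in> todo_lang r"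
proof (induct r u "[] :: 'a item list" rule: todo_steps.induct)
  case (steps_step r u r' v)
  then show ?case by (auto intro: todo_step_todo_lang)
qed simp

theorem todo_steps_iff_rlang: "todo_steps [Exp a] u [] \<longleftrightarrow> u \<in> rlang a"
  using todo_steps_todo_lang[of "[Exp a]" u] todo_steps_Exp[of u a "[]"] by auto

text \<open>
  Starting from [Exp \<alpha>], only finitely many todo lists occur: every reachable list
  consists of subexpressions of \<alpha> stacked along a path of its syntax tree. This is what
  makes the control of the automaton finite.
\<close>

fun reachable_todos :: "'a rewb \<Rightarrow> 'a item list set" where
  "reachable_todos (RSym a) = {[Exp (RSym a)], []}"
| "reachable_todos REps = {[Exp REps], []}"
| "reachable_todos (RRef i) = {[Exp (RRef i)], []}"
| "reachable_todos (RCat a b) =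
     {[Exp (RCat a b)]} \<union> {l @ [Exp b] |l. l \<in> reachable_todos a} \<union> reachable_todos b"
| "reachable_todos (RAlt a b) = {[Exp (RAlt a b)]} \<union> reachable_todos a \<union> reachable_todos b"
| "reachable_todos (RStar a) =
     {[Exp (RStar a)], []} \<union> {l @ [Exp (RStar a)] |l. l \<in> reachable_todos a}"
| "reachable_todos (RCap j a) = {[Exp (RCap j a)], []} \<union> {l @ [Close j] |l. l \<in> reachable_todos a}"

lemma Nil_in_reachable_todos: "[] \<in> reachable_todos a"
  by (induct a) auto

lemma init_in_reachable_todos: "[Exp a] \<in> reachable_todos a"
  by (cases a) auto

lemma finite_reachable_todos: "finite (reachable_todos a)"
proof (induct a)
  case (RCat a b)
  have "{l @ [Exp b] |l. l \<in> reachable_todos a} = (\<lambda>l. l @ [Exp b]) ` reachable_todos a" by auto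
  with RCat show ?case by simp
next
  case (RStar a)
  have "{l @ [Exp (RStar a)] |l. l \<in> reachable_todos a} = (\<lambda>l. l @ [Exp (RStar a)]) ` reachable_todos a"
    by auto
  with RStar show ?case by simp
next
  case (RCap j a)
  have "{l @ [Close j] |l. l \<in> reachable_todos a} = (\<lambda>l. l @ [Close j]) ` reachable_todos a" by auto
  with RCap show ?case by simp
qed auto

text \<open>
  The closure property is proved in a context-independent form: a step from a nonempty
  reachable list followed by an arbitrary tail only rewrites the reachable part.
\<close>

lemma todo_step_reachable_append:
  "l \<in> reachable_todos a \<Longrightarrow> l \<noteq> [] \<Longrightarrow> todo_step (l @ rest) e r' \<Longrightarrow>
   \<exists>l' \<in> reachable_todos a. r' = l' @ rest"
proof (induct a arbitrary: l rest)
  case (RSym x)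
  then show ?case by (auto elim: todo_step.cases intro: Nil_in_reachable_todos)
next
  case (RCat a b)
  from RCat.prems(1) consider "l = [Exp (RCat a b)]"
    | l1 where "l = l1 @ [Exp b]" "l1 \<in> reachable_todos a" | "l \<in> reachable_todos b"
    by auto
  then show ?case
  proof cases
    case 1
    with RCat.prems(3) show ?thesis
      by (auto elim!: todo_step.cases intro!: bexI[of _ "[Exp a, Exp b]"] init_in_reachable_todos)
  next
    case 2
    show ?thesis
    proof (cases "l1 = []")
      case True
      with 2 RCat.prems(3) RCat.hyps(2)[OF init_in_reachable_todos] show ?thesis by auto
    next
      case False
      from RCat.hyps(1)[OF 2(2) False, of "Exp b # rest"] RCat.prems(3) 2 obtain l' where
        "l' \<in> reachable_todos a" "r' = l' @ Exp b # rest"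
        by auto
      then show ?thesis by (intro bexI[of _ "l' @ [Exp b]"]) auto
    qed
  next
    case 3
    from RCat.hyps(2)[OF 3 RCat.prems(2,3)] show ?thesis by auto
  qed
next
  case (RAlt a b)
  from RAlt.prems(1) consider "l = [Exp (RAlt a b)]" | "l \<in> reachable_todos a" | "l \<in> reachable_todos b"
    by auto
  then show ?case
  proof cases
    case 1
    with RAlt.prems(3) show ?thesis
      using init_in_reachable_todos[of a] init_in_reachable_todos[of b] by (auto elim!: todo_step.cases)
  next
    case 2
    from RAlt.hyps(1)[OF 2 RAlt.prems(2,3)] show ?thesis by auto
  next
    case 3
    from RAlt.hyps(2)[OF 3 RAlt.prems(2,3)] show ?thesis by auto
  qed
next
  case (RStar a)
  from RStar.prems(1,2) consider "l = [Exp (RStar a)]"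
    | l1 where "l = l1 @ [Exp (RStar a)]" "l1 \<in> reachable_todos a"
    by auto
  then show ?case
  proof cases
    case 1
    with RStar.prems(3) show ?thesis
      by (auto elim!: todo_step.cases intro: bexI[of _ "[Exp a, Exp (RStar a)]"] init_in_reachable_todos)
  next
    case 2
    show ?thesis
    proof (cases "l1 = []")
      case True
      with 2 RStar.prems(3) show ?thesis
        by (auto elim!: todo_step.cases intro: bexI[of _ "[Exp a, Exp (RStar a)]"] init_in_reachable_todos)
    next
      case False
      from RStar.hyps[OF 2(2) False, of "Exp (RStar a) # rest"] RStar.prems(3) 2 obtain l' where
        "l' \<in> reachable_todos a" "r' = l' @ Exp (RStar a) # rest"
        by auto
      then show ?thesis by (intro bexI[of _ "l' @ [Exp (RStar a)]"]) auto
    qed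
  qed
next
  case (RCap j a)
  from RCap.prems(1,2) consider "l = [Exp (RCap j a)]"
    | l1 where "l = l1 @ [Close j]" "l1 \<in> reachable_todos a"
    by auto
  then show ?case
  proof cases
    case 1
    with RCap.prems(3) show ?thesis
      by (auto elim!: todo_step.cases intro: bexI[of _ "[Exp a, Close j]"] init_in_reachable_todos)
  next
    case 2
    show ?thesis
    proof (cases "l1 = []")
      case True
      with 2 RCap.prems(3) show ?thesis
        using Nil_in_reachable_todos[of "RCap j a"] by (auto elim!: todo_step.cases)
    next
      case False
      from RCap.hyps[OF 2(2) False, of "Close j # rest"] RCap.prems(3) 2 obtain l' where
        "l' \<in> reachable_todos a" "r' = l' @ Close j # rest"
        by auto
      then show ?thesis by (intro bexI[of _ "l' @ [Close j]"]) auto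
    qed
  qed
qed (auto elim: todo_step.cases)

lemma todo_step_reachable: "r \<in> reachable_todos a \<Longrightarrow> todo_step r e r' \<Longrightarrow> r' \<in> reachable_todos a"
  using todo_step_reachable_append[of r a "[]" e r'] by (cases "r = []") (auto elim: todo_step.cases)

fun labels :: "'a rewb \<Rightarrow> nat set" where
  "labels (RSym a) = {}"
| "labels REps = {}"
| "labels (RRef i) = {i}"
| "labels (RCat a b) = labels a \<union> labels b"
| "labels (RAlt a b) = labels a \<union> labels b"
| "labels (RStar a) = labels a"
| "labels (RCap j a) = insert j (labels a)"

lemma finite_labels: "finite (labels a)"
  by (induct a) auto

fun item_labels :: "'a item \<Rightarrow> nat set" where
  "item_labels (Exp a) = labels a"
| "item_labels (Close j) = {j}"

fun sym_labels :: "'a sym \<Rightarrow> nat set" where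
  "sym_labels (Ch a) = {}"
| "sym_labels (Opn j) = {j}"
| "sym_labels (Cls j) = {j}"
| "sym_labels (Num j) = {j}"

lemma reachable_todos_labels:
  "r \<in> reachable_todos \<alpha> \<Longrightarrow> x \<in> set r \<Longrightarrow> item_labels x \<subseteq> labels \<alpha>"
proof (induct \<alpha> arbitrary: r)
  case (RCat a b) then show ?case by fastforce
next
  case (RAlt a b) then show ?case by fastforce
next
  case (RStar a) then show ?case by fastforce
next
  case (RCap j a) then show ?case by fastforce
qed auto

lemma todo_step_sym_labels:
  assumes "todo_step r e r'" "r \<in> reachable_todos \<alpha>" "x \<in> set e"
  shows "sym_labels x \<subseteq> labels \<alpha>"
proof -
  have "sym_labels x \<subseteq> item_labels (hd r)"
    using assms(1,3) by (induct rule: todo_step.induct) auto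
  moreover have "r \<noteq> []" using assms(1) by (auto elim: todo_step.cases)
  ultimately show ?thesis using reachable_todos_labels[OF assms(2)] by (meson hd_in_set subset_trans)
qed

section \<open>Dereferencing by positions\<close>

text \<open>
  For a string h of R_k(\<alpha>), the value of
  the number at position k is read off h itself: find the nearest Opn j to its left and read
  the letters up to the matching Cls j, dereferencing nested numbers in the same way. Unlike
  deref, this never rewrites h, and it is what the automaton computes on its stack.
\<close>

fun opt_append :: "'b list option \<Rightarrow> 'b list option \<Rightarrow> 'b list option" where
  "opt_append (Some x) (Some y) = Some (x @ y)"
| "opt_append _ _ = None"

lemma opt_append_assoc: "opt_append (opt_append x y) z = opt_append x (opt_append y z)"
  by (cases x; cases y; cases z) auto

lemma opt_append_eq_Some_iff: "opt_append x y = Some z \<longleftrightarrow> (\<exists>a b. x = Some a \<and> y = Some b \<and> z = a @ b)"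
  by (cases x; cases y) auto

lemma opt_append_eq_None_iff[simp]: "opt_append x y = None \<longleftrightarrow> x = None \<or> y = None"
  by (cases x; cases y) auto

lemma opt_append_Some_Nil[simp]: "opt_append (Some []) y = y" "opt_append y (Some []) = y"
  by (cases y; simp)+

fun last_open :: "nat \<Rightarrow> 'a sym list \<Rightarrow> nat option" where
  "last_open j [] = None"
| "last_open j (x # l) = (case last_open j l of Some q \<Rightarrow> Some (Suc q) | None \<Rightarrow> if x = Opn j then Some 0 else None)"

lemma last_open_snoc: "last_open j (l @ [x]) = (if x = Opn j then Some (length l) else last_open j l)"
  by (induct l) (auto split: option.splits)

lemma last_open_eq_None_iff: "last_open j l = None \<longleftrightarrow> Opn j \<notin> set l"
  by (induct l) (auto split: option.splits)

lemma last_open_eq_SomeD: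
  "last_open j l = Some q \<Longrightarrow>
   q < length l \<and> l ! q = Opn j \<and> (\<forall>q'. q < q' \<and> q' < length l \<longrightarrow> l ! q' \<noteq> Opn j)"
proof (induct l arbitrary: q rule: rev_induct)
  case Nil then show ?case by simp
next
  case (snoc x l)
  then show ?case
    by (auto simp: last_open_snoc nth_append split: if_splits)
qed

lemma last_open_take_Suc: "t < length h \<Longrightarrow> last_open j (take (Suc t) h) = (if h ! t = Opn j then Some t else last_open j (take t h))"
  by (simp add: take_Suc_conv_app_nth last_open_snoc)

function read_capture :: "'a sym list \<Rightarrow> nat \<Rightarrow> nat \<Rightarrow> nat \<Rightarrow> 'a list option" where
  "read_capture h i n m = (if m \<le> n \<or> length h \<le> n then None else
     (case h ! n of
        Ch a \<Rightarrow> map_option ((#) a) (read_capture h i (Suc n) m)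
      | Opn j \<Rightarrow> read_capture h i (Suc n) m
      | Cls j \<Rightarrow> (if j = i then Some [] else read_capture h i (Suc n) m)
      | Num j \<Rightarrow> opt_append
          (case last_open j (take n h) of None \<Rightarrow> Some [] | Some q \<Rightarrow> read_capture h j (Suc q) n)
          (read_capture h i (Suc n) m)))"
  by pat_completeness auto
termination
  by (relation "measures [\<lambda>(h,i,n,m). m, \<lambda>(h,i,n,m). m - n]") auto

declare read_capture.simps [simp del]

definition ref_val :: "'a sym list \<Rightarrow> nat \<Rightarrow> nat \<Rightarrow> 'a list option" where
  "ref_val h j k = (case last_open j (take k h) of None \<Rightarrow> Some [] | Some q \<Rightarrow> read_capture h j (Suc q) k)"

lemma read_capture_unfold: "n < m \<Longrightarrow> n < length h \<Longrightarrow> read_capture h i n m = (case h ! n of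
        Ch a \<Rightarrow> map_option ((#) a) (read_capture h i (Suc n) m)
      | Opn j \<Rightarrow> read_capture h i (Suc n) m
      | Cls j \<Rightarrow> (if j = i then Some [] else read_capture h i (Suc n) m)
      | Num j \<Rightarrow> opt_append (ref_val h j n) (read_capture h i (Suc n) m))"
  by (subst read_capture.simps) (simp add: ref_val_def split: sym.split)

lemma read_capture_empty: "m \<le> n \<Longrightarrow> read_capture h i n m = None"
  by (subst read_capture.simps) auto

lemma read_capture_append: "m \<le> length h \<Longrightarrow> read_capture (h @ h') i n m = read_capture h i n m"
proof (induct h i n m rule: read_capture.induct)
  case (1 h i n m)
  show ?case
  proof (cases "m \<le> n")
    case True then show ?thesis by (simp add: read_capture_empty)
  next
    case False
    then have nl: "n < length h" using "1.prems" by auto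
    have tk: "take n (h @ h') = take n h" using nl by simp
    show ?thesis
      using False nl 1(1-5) "1.prems"
      by (subst (1 2) read_capture.simps) (auto simp: nth_append tk split: sym.splits option.splits)
  qed
qed

lemma ref_val_append: "k \<le> length h \<Longrightarrow> ref_val (h @ h') j k = ref_val h j k"
  by (simp add: ref_val_def read_capture_append split: option.splits)

definition sym_val :: "'a sym list \<Rightarrow> nat \<Rightarrow> 'a list option" where
  "sym_val h k = (case h ! k of Ch a \<Rightarrow> Some [a] | Num j \<Rightarrow> ref_val h j k | _ \<Rightarrow> Some [])"

fun deref_upto :: "'a sym list \<Rightarrow> nat \<Rightarrow> 'a list option" where
  "deref_upto h 0 = Some []"
| "deref_upto h (Suc k) = opt_append (deref_upto h k) (sym_val h k)"

definition deref_rec :: "'a sym list \<Rightarrow> 'a list option" where "deref_rec h = deref_upto h (length h)"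

lemma sym_val_append: "k < length h \<Longrightarrow> sym_val (h @ h') k = sym_val h k"
  by (simp add: sym_val_def nth_append ref_val_append split: sym.splits)

lemma deref_upto_append: "k \<le> length h \<Longrightarrow> deref_upto (h @ h') k = deref_upto h k"
  by (induct k) (auto simp: sym_val_append)

lemma deref_rec_snoc: "deref_rec (h @ [x]) = opt_append (deref_rec h) (sym_val (h @ [x]) (length h))"
  by (simp add: deref_rec_def deref_upto_append)

lemma sym_val_snoc:
  "sym_val (h @ [x]) (length h) =
     (case x of Ch a \<Rightarrow> Some [a] | Num j \<Rightarrow> ref_val h j (length h) | _ \<Rightarrow> Some [])"
  using ref_val_append[of "length h" h "[x]"] by (cases x) (simp_all add: sym_val_def)

lemma deref_upto_None_mono: "deref_upto h k = None \<Longrightarrow> k \<le> k' \<Longrightarrow> deref_upto h k' = None"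
  by (induct k' ) (auto simp: le_Suc_eq)

lemma deref_upto_Some_sym_val: "deref_upto h k \<noteq> None \<Longrightarrow> k' < k \<Longrightarrow> sym_val h k' \<noteq> None"
proof (induct k)
  case (Suc k)
  then show ?case by (cases "deref_upto h k"; cases "sym_val h k") (auto simp: less_Suc_eq)
qed simp

definition expand_at :: "'a sym list \<Rightarrow> nat \<Rightarrow> 'a sym list" where
  "expand_at h k = (case h ! k of Num j \<Rightarrow> map Ch (the (ref_val h j k)) | x \<Rightarrow> [x])"

definition expanded_upto :: "'a sym list \<Rightarrow> nat \<Rightarrow> 'a sym list" where
  "expanded_upto h k = concat (map (expand_at h) [0..<k])"

lemma gh_append [simp]: "gh (x @ y) = gh x @ gh y"
  by (simp add: gh_def)

lemma gh_Nil [simp]: "gh [] = []"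
  by (simp add: gh_def)

lemma gh_Cons: "gh (x # y) = (case x of Ch a \<Rightarrow> [a] | _ \<Rightarrow> []) @ gh y"
  by (simp add: gh_def)

lemma gh_map_Ch [simp]: "gh (map Ch v) = v"
  by (induct v) (auto simp: gh_def)

lemma deref_upto_eq_gh:
  "deref_upto h k \<noteq> None \<Longrightarrow> k \<le> length h \<Longrightarrow> deref_upto h k = Some (gh (expanded_upto h k))"
proof (induct k)
  case 0 then show ?case by (simp add: expanded_upto_def)
next
  case (Suc k)
  then obtain X P where X: "deref_upto h k = Some X" "sym_val h k = Some P"
    by (cases "deref_upto h k"; cases "sym_val h k") auto
  with Suc have "X = gh (expanded_upto h k)" by auto
  moreover have "gh (expand_at h k) = P" using X(2)
    by (cases "h ! k") (auto simp: sym_val_def expand_at_def gh_Cons)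
  ultimately show ?case using X by (simp add: expanded_upto_def)
qed

lemma Opn_in_expand_at: "Opn j \<in> set (expand_at h k) \<longleftrightarrow> h ! k = Opn j"
  by (auto simp: expand_at_def split: sym.splits)

lemma read_capture_eq:
  assumes "\<forall>k'<m. sym_val h k' \<noteq> None" "m \<le> length h" "n \<le> m"
  shows "read_capture h i n m =
    (let c = concat (map (expand_at h) [n..<m]) in
     if Cls i \<in> set c then Some (gh (takeWhile (\<lambda>x. x \<noteq> Cls i) c)) else None)"
  using assms(3)
proof (induct "m - n" arbitrary: n)
  case 0 then show ?case by (simp add: read_capture_empty)
next
  case (Suc d)
  then have nm: "n < m" and nl: "n < length h" using assms(2) by auto
  have up: "[n..<m] = n # [Suc n..<m]" using nm by (simp add: upt_conv_Cons)
  have IH: "read_capture h i (Suc n) m = (let c = concat (map (expand_at h) [Suc n..<m]) in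
     if Cls i \<in> set c then Some (gh (takeWhile (\<lambda>x. x \<noteq> Cls i) c)) else None)"
    using Suc by auto
  show ?case
  proof (cases "h ! n")
    case (Num j)
    then obtain V where V: "ref_val h j n = Some V" using assms(1) nm by (auto simp: sym_val_def)
    have tw: "takeWhile (\<lambda>x. x \<noteq> Cls i) (map Ch V @ z) = map Ch V @ takeWhile (\<lambda>x. x \<noteq> Cls i) z" for z
      by (induct V) auto
    show ?thesis using Num nm nl IH V
      by (auto simp: read_capture_unfold up expand_at_def tw Let_def split: option.splits)
  qed (use nm nl IH in \<open>simp_all add: read_capture_unfold up expand_at_def gh_Cons Let_def\<close>)
qed

lemma expanded_upto_last_open:
  assumes "last_open j (take k h) = Some q" "k \<le> length h"
  shows "Opn j \<in> set (expanded_upto h k)"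
    and "rev (takeWhile (\<lambda>x. x \<noteq> Opn j) (rev (expanded_upto h k))) = concat (map (expand_at h) [Suc q..<k])"
proof -
  from last_open_eq_SomeD[OF assms(1)] assms(2)
  have qk: "q < k" and hq: "h ! q = Opn j" and later: "\<forall>q'. q < q' \<and> q' < k \<longrightarrow> h ! q' \<noteq> Opn j"
    by auto
  have "[0..<k] = [0..<q] @ q # [Suc q..<k]"
    using qk by (metis le_add1 le_add_same_cancel1 less_imp_add_positive upt_add_eq_append upt_conv_Cons)
  then have split: "expanded_upto h k = expanded_upto h q @ [Opn j] @ concat (map (expand_at h) [Suc q..<k])"
    using hq by (simp add: expanded_upto_def expand_at_def)
  then show "Opn j \<in> set (expanded_upto h k)" by simp
  have "Opn j \<notin> set (concat (map (expand_at h) [Suc q..<k]))"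
    using later by (auto simp: Opn_in_expand_at)
  then have "takeWhile (\<lambda>x. x \<noteq> Opn j) (rev (concat (map (expand_at h) [Suc q..<k])) @ Opn j # rest) =
      rev (concat (map (expand_at h) [Suc q..<k]))" for rest
    by (subst takeWhile_append2) auto
  then show "rev (takeWhile (\<lambda>x. x \<noteq> Opn j) (rev (expanded_upto h k))) = concat (map (expand_at h) [Suc q..<k])"
    unfolding split by simp
qed

lemma Opn_in_expanded_upto_iff:
  assumes "k \<le> length h"
  shows "Opn j \<in> set (expanded_upto h k) \<longleftrightarrow> Opn j \<in> set (take k h)"
proof -
  have "Opn j \<in> set (expanded_upto h k) \<longleftrightarrow> (\<exists>x<k. h ! x = Opn j)"
    by (auto simp: expanded_upto_def Opn_in_expand_at)
  also have "\<dots> \<longleftrightarrow> Opn j \<in> set (take k h)"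
    using assms by (auto simp: in_set_conv_nth)
  finally show ?thesis .
qed

lemma deref_aux_expanded_upto:
  assumes "k \<le> length h" "deref_upto h k \<noteq> None"
  shows "deref_aux (expanded_upto h k) (drop k h) = deref_rec h"
  using assms
proof (induct "length h - k" arbitrary: k)
  case 0
  then show ?case using deref_upto_eq_gh[OF 0(3)] by (simp add: deref_rec_def)
next
  case (Suc d)
  then have kl: "k < length h" by auto
  have dr: "drop k h = h ! k # drop (Suc k) h" using kl by (simp add: Cons_nth_drop_Suc)
  have exp_Suc: "expanded_upto h (Suc k) = expanded_upto h k @ expand_at h k"
    by (simp add: expanded_upto_def)
  have defined: "\<forall>k'<k. sym_val h k' \<noteq> None" using deref_upto_Some_sym_val[OF Suc(4)] by auto
  have IH: "deref_upto h (Suc k) \<noteq> None \<Longrightarrow>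
      deref_aux (expanded_upto h (Suc k)) (drop (Suc k) h) = deref_rec h"
    using Suc kl by auto
  show ?case
  proof (cases "h ! k")
    case (Num j)
    show ?thesis
    proof (cases "last_open j (take k h)")
      case None
      then have "Opn j \<notin> set (expanded_upto h k)" "ref_val h j k = Some []"
        using Opn_in_expanded_upto_iff[of k h j] kl last_open_eq_None_iff by (auto simp: ref_val_def)
      with Num show ?thesis using dr IH Suc(4) exp_Suc by (simp add: sym_val_def expand_at_def)
    next
      case (Some q)
      let ?c = "concat (map (expand_at h) [Suc q..<k])"
      have qk: "q < k" using last_open_eq_SomeD[OF Some] kl by simp
      have val: "ref_val h j k = (if Cls j \<in> set ?c then Some (gh (takeWhile (\<lambda>x. x \<noteq> Cls j) ?c)) else None)"
        using read_capture_eq[OF defined, of "Suc q" j] Some kl qk by (simp add: ref_val_def)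
      have step: "deref_aux (expanded_upto h k) (drop k h) =
          (if Cls j \<in> set ?c then deref_aux (expanded_upto h k @ map Ch (gh (takeWhile (\<lambda>x. x \<noteq> Cls j) ?c)))
             (drop (Suc k) h) else None)"
        using dr Num expanded_upto_last_open[OF Some] kl by (simp add: Let_def)
      show ?thesis
      proof (cases "Cls j \<in> set ?c")
        case True
        with val Num Suc(4) have "deref_upto h (Suc k) \<noteq> None" by (auto simp: sym_val_def)
        with True step IH exp_Suc val Num show ?thesis by (simp add: expand_at_def)
      next
        case False
        with val Num have "deref_upto h (Suc k) = None" by (simp add: sym_val_def)
        then have "deref_rec h = None"
          unfolding deref_rec_def using deref_upto_None_mono kl by (metis Suc_leI)
        with False step show ?thesis by simp
      qed
    qed
  qed (use dr IH Suc(4) exp_Suc in \<open>simp_all add: sym_val_def expand_at_def\<close>)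
qed

theorem deref_eq_deref_rec: "deref h = deref_rec h"
  using deref_aux_expanded_upto[of 0 h] by (simp add: deref_def expanded_upto_def)

section \<open>The automaton\<close>

instance sym :: (countable) countable by countable_datatype
instance rewb :: (countable) countable by countable_datatype
instance item :: (countable) countable by countable_datatype

datatype 'a stack_sym = Base | Hist "'a sym" | Mark nat
instance stack_sym :: (countable) countable by countable_datatype

datatype 'a state = Gen "'a item list" | Down nat nat "'a item list" | Read nat nat "'a item list"
  | Up nat "'a item list" | Pop nat "'a item list" | Destr nat nat "'a item list"
  | Skip nat nat "'a item list" | Push nat "'a item list"
instance state :: (countable) countable by countable_datatype

text \<open>
  Gen r generates from the todo list r. All other states resolve the backreference Num io,
  to be pushed when done, before resuming with r; their label i is the capture currently
  being located (Down) or read (Read), or whose reading is to be resumed (Destr, Skip).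
\<close>

abbreviation hist_cell :: "'a sym \<Rightarrow> 'a stack_sym cell" where "hist_cell e \<equiv> SCell (Hist e)"

inductive_set moves :: "('a state, 'a, 'a stack_sym) trans set" where
  gen_silent: "todo_step r [] r' \<Longrightarrow> (Gen r, x, SCell z, Gen r', False, AStay) \<in> moves"
| gen_letter: "todo_step r [Ch a] r' \<Longrightarrow> (Gen r, Some a, SCell z, Gen r', True, AReplace [z, Hist (Ch a)]) \<in> moves"
| gen_open: "todo_step r [Opn j] r' \<Longrightarrow> (Gen r, x, SCell z, Gen r', False, AReplace [z, Hist (Opn j)]) \<in> moves"
| gen_close: "todo_step r [Cls j] r' \<Longrightarrow> (Gen r, x, SCell z, Gen r', False, AReplace [z, Hist (Cls j)]) \<in> moves"
| gen_ref: "todo_step r [Num i] r' \<Longrightarrow> (Gen r, x, SCell z, Down i i r', False, AStay) \<in> moves"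
| down_found: "(Down io i r, x, hist_cell (Opn i), Read io i r, False, ARight) \<in> moves"
| down_bottom: "(Down io i r, x, SBot, Up io r, False, AStay) \<in> moves"
| down_left: "c \<noteq> hist_cell (Opn i) \<Longrightarrow> c \<noteq> SBot \<Longrightarrow> c \<noteq> STop \<Longrightarrow>
    (Down io i r, x, c, Down io i r, False, ALeft) \<in> moves"
| read_letter: "(Read io i r, Some a, hist_cell (Ch a), Read io i r, True, ARight) \<in> moves"
| read_open: "(Read io i r, x, hist_cell (Opn j), Read io i r, False, ARight) \<in> moves"
| read_close: "j \<noteq> i \<Longrightarrow> (Read io i r, x, hist_cell (Cls j), Read io i r, False, ARight) \<in> moves"
| read_end: "(Read io i r, x, hist_cell (Cls i), Up io r, False, AStay) \<in> moves"
| read_ref: "(Read io i r, x, hist_cell (Num j), Down io j r, False, ACreate [Mark i]) \<in> moves"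
| up_bottom: "(Up io r, x, SBot, Up io r, False, ARight) \<in> moves"
| up_base: "(Up io r, x, SCell Base, Up io r, False, ARight) \<in> moves"
| up_hist: "(Up io r, x, hist_cell e, Up io r, False, ARight) \<in> moves"
| up_cent: "(Up io r, x, SCent, Pop io r, False, ARight) \<in> moves"
| up_top: "(Up io r, x, STop, Push io r, False, ALeft) \<in> moves"
| pop_mark: "(Pop io r, x, SCell (Mark i), Destr io i r, False, AReplace []) \<in> moves"
| destroy: "(Destr io i r, x, SCent, Skip io i r, False, ADestroy) \<in> moves"
| skip: "(Skip io i r, x, hist_cell (Num j), Read io i r, False, ARight) \<in> moves"
| push: "(Push io r, x, SCell z, Gen r, False, AReplace [z, Hist (Num io)]) \<in> moves"

definition syms_of :: "'a rewb \<Rightarrow> 'a sym set" where "syms_of \<alpha> = {e. sym_labels e \<subseteq> labels \<alpha>}"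
definition stack_syms :: "'a rewb \<Rightarrow> 'a stack_sym set" where
  "stack_syms \<alpha> = {Base} \<union> Hist ` syms_of \<alpha> \<union> Mark ` labels \<alpha>"

fun state_ok :: "'a rewb \<Rightarrow> 'a state \<Rightarrow> bool" where
  "state_ok \<alpha> (Gen r) = (r \<in> reachable_todos \<alpha>)"
| "state_ok \<alpha> (Down io i r) = (io \<in> labels \<alpha> \<and> i \<in> labels \<alpha> \<and> r \<in> reachable_todos \<alpha>)"
| "state_ok \<alpha> (Read io i r) = (io \<in> labels \<alpha> \<and> i \<in> labels \<alpha> \<and> r \<in> reachable_todos \<alpha>)"
| "state_ok \<alpha> (Up io r) = (io \<in> labels \<alpha> \<and> r \<in> reachable_todos \<alpha>)"
| "state_ok \<alpha> (Pop io r) = (io \<in> labels \<alpha> \<and> r \<in> reachable_todos \<alpha>)"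
| "state_ok \<alpha> (Destr io i r) = (io \<in> labels \<alpha> \<and> i \<in> labels \<alpha> \<and> r \<in> reachable_todos \<alpha>)"
| "state_ok \<alpha> (Skip io i r) = (io \<in> labels \<alpha> \<and> i \<in> labels \<alpha> \<and> r \<in> reachable_todos \<alpha>)"
| "state_ok \<alpha> (Push io r) = (io \<in> labels \<alpha> \<and> r \<in> reachable_todos \<alpha>)"

definition states_of :: "'a rewb \<Rightarrow> 'a state set" where "states_of \<alpha> = {q. state_ok \<alpha> q}"

definition short_acts :: "'g set \<Rightarrow> 'g sact set" where
  "short_acts G = {AStay, ALeft, ARight, ADestroy} \<union> AReplace ` {w. set w \<subseteq> G \<and> length w \<le> 2}
      \<union> ACreate ` {w. set w \<subseteq> G \<and> length w \<le> 2}"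

definition rewb_trans :: "'a rewb \<Rightarrow> ('a state, 'a, 'a stack_sym) trans set" where
  "rewb_trans \<alpha> = moves \<inter> {(q, x, c, q', adv, act). q \<in> states_of \<alpha> \<and> q' \<in> states_of \<alpha>
     \<and> c \<in> cells_of (stack_syms \<alpha>) \<and> act \<in> short_acts (stack_syms \<alpha>)}"

lemma finite_syms_of: "finite (syms_of (\<alpha> :: ('a::finite) rewb))"
proof -
  have "syms_of \<alpha> \<subseteq> range Ch \<union> Opn ` labels \<alpha> \<union> Cls ` labels \<alpha> \<union> Num ` labels \<alpha>"
    unfolding syms_of_def by (auto, case_tac x, auto)
  moreover have "finite (range (Ch :: 'a \<Rightarrow> 'a sym))" by simp
  ultimately show ?thesis using finite_labels[of \<alpha>] by (meson finite_Un finite_imageI finite_subset)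
qed

lemma finite_stack_syms: "finite (stack_syms (\<alpha> :: ('a::finite) rewb))"
  unfolding stack_syms_def using finite_syms_of finite_labels by auto

lemma finite_states_of: "finite (states_of \<alpha>)"
proof -
  let ?L = "labels \<alpha>" and ?R = "reachable_todos \<alpha>"
  have "states_of \<alpha> \<subseteq> Gen ` ?R
     \<union> (\<lambda>(io, i, r). Down io i r) ` (?L \<times> ?L \<times> ?R) \<union> (\<lambda>(io, i, r). Read io i r) ` (?L \<times> ?L \<times> ?R)
     \<union> (\<lambda>(io, r). Up io r) ` (?L \<times> ?R) \<union> (\<lambda>(io, r). Pop io r) ` (?L \<times> ?R)
     \<union> (\<lambda>(io, i, r). Destr io i r) ` (?L \<times> ?L \<times> ?R) \<union> (\<lambda>(io, i, r). Skip io i r) ` (?L \<times> ?L \<times> ?R)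
     \<union> (\<lambda>(io, r). Push io r) ` (?L \<times> ?R)" (is "_ \<subseteq> ?S")
  proof
    fix q assume "q \<in> states_of \<alpha>" then show "q \<in> ?S" by (cases q) (auto simp: states_of_def image_iff)
  qed
  then show ?thesis using finite_labels[of \<alpha>] finite_reachable_todos[of \<alpha>] by (auto intro: finite_subset)
qed

lemma finite_short_acts: "finite G \<Longrightarrow> finite (short_acts G)"
  unfolding short_acts_def using finite_lists_length_le[of G 2] by auto

lemma finite_rewb_trans: "finite (rewb_trans (\<alpha> :: ('a::finite) rewb))"
proof -
  have "rewb_trans \<alpha> \<subseteq>
      states_of \<alpha> \<times> UNIV \<times> cells_of (stack_syms \<alpha>) \<times> states_of \<alpha> \<times> UNIV \<times> short_acts (stack_syms \<alpha>)"
    unfolding rewb_trans_def by auto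
  moreover have "finite (states_of \<alpha> \<times> (UNIV :: 'a option set) \<times> cells_of (stack_syms \<alpha>) \<times>
      states_of \<alpha> \<times> (UNIV :: bool set) \<times> short_acts (stack_syms \<alpha>))"
    by (intro finite_cartesian_product finite_states_of finite_stack_syms finite_short_acts finite_UNIV) (auto simp: finite_stack_syms cells_of_def)
  ultimately show ?thesis by (rule finite_subset)
qed

definition rewb_nsa :: "('a::finite) rewb \<Rightarrow> 'a nsa" where
  "rewb_nsa \<alpha> = nsa_of (states_of \<alpha>) (stack_syms \<alpha>) (rewb_trans \<alpha>) (Gen [Exp \<alpha>]) Base {Gen []}"

lemma is_nsa_rewb_nsa: "is_nsa (rewb_nsa \<alpha>)"
  unfolding rewb_nsa_def
proof (rule is_nsa_nsa_of)
  show "finite (states_of \<alpha>)" "finite (stack_syms \<alpha>)" "finite (rewb_trans \<alpha>)"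
    by (rule finite_states_of finite_stack_syms finite_rewb_trans)+
  show "Gen [Exp \<alpha>] \<in> states_of \<alpha>" "Base \<in> stack_syms \<alpha>" "{Gen []} \<subseteq> states_of \<alpha>"
    by (auto simp: states_of_def stack_syms_def init_in_reachable_todos Nil_in_reachable_todos)
  fix q x c q' adv act assume "(q, x, c, q', adv, act) \<in> rewb_trans \<alpha>"
  then have "q \<in> states_of \<alpha>" "q' \<in> states_of \<alpha>" "c \<in> cells_of (stack_syms \<alpha>)" "act \<in> short_acts (stack_syms \<alpha>)"
    unfolding rewb_trans_def by auto
  then show "q \<in> states_of \<alpha> \<and> q' \<in> states_of \<alpha> \<and> cell_syms c \<subseteq> stack_syms \<alpha> \<and> sact_syms act \<subseteq> stack_syms \<alpha>"
    by (auto simp: short_acts_def cells_of_def)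
qed

lemma nsa_lang_rewb_nsa_trans_lang: "nsa_lang (rewb_nsa \<alpha>) = trans_lang (rewb_trans \<alpha>) (Gen [Exp \<alpha>]) Base {Gen []}"
  unfolding rewb_nsa_def by (rule nsa_lang_nsa_of)

subsection \<open>Stack layout\<close>

text \<open>
  A stack holds the history h, i.e. the symbols of v generated so far, above the cells
  SBot and Base, so that position p holds h ! (p - 2). A frame (i, m, b) records that
  reading capture i was interrupted by the backreference at position m of h; its substack
  sits just below that reference and holds Mark i as long as b. Frames are listed
  innermost first.
\<close>

type_synonym frames = "(nat \<times> nat \<times> bool) list"

fun layout :: "'a sym list \<Rightarrow> nat \<Rightarrow> frames \<Rightarrow> 'a stack_sym cell list" where
  "layout h st [] = map hist_cell (drop st h) @ [STop]"
| "layout h st ((i, m, b) # fr) = map hist_cell (take (m - st) (drop st h)) @ [SCent] @ (if b then [SCell (Mark i)] else [])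
      @ [STop] @ layout h m fr"

definition stack_of :: "'a sym list \<Rightarrow> frames \<Rightarrow> 'a stack_sym cell list" where
  "stack_of h fr = SBot # SCell Base # layout h 0 fr"

fun read_bound :: "'a sym list \<Rightarrow> frames \<Rightarrow> nat" where
  "read_bound h [] = length h" | "read_bound h ((i, m, b) # fr) = m"

fun frames_val :: "'a sym list \<Rightarrow> frames \<Rightarrow> 'a list option" where
  "frames_val h [] = Some []"
| "frames_val h ((i, m, b) # fr) = opt_append (read_capture h i (Suc m) (read_bound h fr)) (frames_val h fr)"

definition marked :: "frames \<Rightarrow> bool" where
  "marked fr \<longleftrightarrow> (\<forall>(i, m, b) \<in> set fr. b)"

fun wf_frames :: "'a sym list \<Rightarrow> frames \<Rightarrow> bool" where
  "wf_frames h [] = True"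
| "wf_frames h ((i, m, b) # fr) = (m < read_bound h fr \<and> (\<exists>j. h ! m = Num j) \<and> marked fr \<and> wf_frames h fr)"

lemma read_bound_le: "wf_frames h fr \<Longrightarrow> read_bound h fr \<le> length h"
  by (induct fr rule: wf_frames.induct) auto

lemma layout_split:
  "st \<le> m \<Longrightarrow> m \<le> read_bound h fr \<Longrightarrow> m \<le> length h \<Longrightarrow>
   layout h st fr = map hist_cell (take (m - st) (drop st h)) @ layout h m fr"
proof (cases fr)
  case Nil
  assume a: "st \<le> m" "m \<le> read_bound h fr" "m \<le> length h"
  have "drop st h = take (m - st) (drop st h) @ drop m h"
    using a by (metis append_take_drop_id drop_drop le_add_diff_inverse2)
  then show ?thesis using Nil by (metis layout.simps(1) map_append append.assoc)
next
  case (Cons f fr')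
  obtain i m1 b where f: "f = (i, m1, b)" by (cases f)
  assume a: "st \<le> m" "m \<le> read_bound h fr" "m \<le> length h"
  then have mm: "m \<le> m1" using Cons f by simp
  have "take (m1 - st) (drop st h) = take (m - st) (drop st h) @ take (m1 - m) (drop m h)"
  proof -
    have e: "m1 - st = (m - st) + (m1 - m)" using a mm by simp
    have d: "drop (m - st) (drop st h) = drop m h" using a(1) by simp
    show ?thesis unfolding e take_add d ..
  qed
  then show ?thesis using Cons f by simp
qed

lemma stack_of_Nil: "stack_of h [] = SBot # SCell Base # map hist_cell h @ [STop]"
  by (simp add: stack_of_def)

lemma stack_of_Cons:
  "stack_of h ((i, m, b) # fr) =
     SBot # SCell Base # map hist_cell (take m h) @ [SCent] @ (if b then [SCell (Mark i)] else [])
       @ [STop] @ layout h m fr"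
  by (simp add: stack_of_def)

lemma top_idx_stack_of_Nil: "top_idx (stack_of h []) = length h + 2"
  using top_idx_append_STop[of "SBot # SCell Base # map hist_cell h" "[]"] by (auto simp: stack_of_Nil)

lemma top_idx_stack_of_Cons: "m \<le> length h \<Longrightarrow> top_idx (stack_of h ((i, m, b) # fr)) = m + (if b then 4 else 3)"
proof -
  assume "m \<le> length h"
  have "stack_of h ((i, m, b) # fr) = (SBot # SCell Base # map hist_cell (take m h) @ [SCent] @ (if b then [SCell (Mark i)] else [])) @ STop # layout h m fr"
    by (simp add: stack_of_Cons)
  moreover have "STop \<notin> set (SBot # SCell Base # map hist_cell (take m h) @ [SCent] @ (if b then [SCell (Mark i)] else []))"
    by auto
  ultimately have "top_idx (stack_of h ((i, m, b) # fr)) = length (SBot # SCell Base # map hist_cell (take m h) @ [SCent] @ (if b then [SCell (Mark i)] else []))"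
    using top_idx_append_STop by metis
  then show ?thesis using \<open>m \<le> length h\<close> by (simp add: min_def)
qed

lemma top_idx_stack_of:
  "wf_frames h fr \<Longrightarrow>
   top_idx (stack_of h fr) = read_bound h fr + (case fr of [] \<Rightarrow> 2 | (i, m, b) # _ \<Rightarrow> if b then 4 else 3)"
proof (cases fr)
  case Nil then show ?thesis by (simp add: top_idx_stack_of_Nil)
next
  case (Cons f fr')
  assume w: "wf_frames h fr"
  obtain i m b where f: "f = (i, m, b)" by (cases f)
  have "m \<le> length h" using w Cons f read_bound_le[of h fr'] by auto
  then show ?thesis using Cons f top_idx_stack_of_Cons[OF \<open>m \<le> length h\<close>] by (cases b) simp_all
qed

definition cell_at :: "'a sym list \<Rightarrow> frames \<Rightarrow> nat \<Rightarrow> 'a stack_sym cell" where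
  "cell_at h fr p = (if p = 0 then SBot else if p = 1 then SCell Base else if p < read_bound h fr + 2 then hist_cell (h ! (p - 2))
     else if p = read_bound h fr + 2 then (if fr = [] then STop else SCent)
     else (case fr of [] \<Rightarrow> STop | (i, m, b) # _ \<Rightarrow> if b \<and> p = m + 3 then SCell (Mark i) else STop))"

lemma stack_of_nth: "wf_frames h fr \<Longrightarrow> p \<le> top_idx (stack_of h fr) \<Longrightarrow> stack_of h fr ! p = cell_at h fr p"
proof (cases fr)
  case Nil
  assume "p \<le> top_idx (stack_of h fr)"
  then have "p \<le> length h + 2" using Nil by (simp add: top_idx_stack_of_Nil)
  then show ?thesis using Nil
    by (auto simp: stack_of_Nil cell_at_def nth_append nth_Cons' not_less numeral_2_eq_2)
next
  case (Cons f fr')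
  obtain i m b where f: "f = (i, m, b)" by (cases f)
  assume w: "wf_frames h fr" and p: "p \<le> top_idx (stack_of h fr)"
  have ml: "m \<le> length h" using w Cons f read_bound_le[of h fr'] by auto
  have p2: "p \<le> m + (if b then 4 else 3)" using p top_idx_stack_of_Cons[OF ml] Cons f by simp
  have lt: "length (take m h) = m" using ml by simp
  show ?thesis using Cons f p2 ml lt
    by (auto simp: stack_of_Cons cell_at_def nth_append nth_Cons' not_less numeral_2_eq_2)
qed

lemma cell_at_eq_iff:
  assumes "wf_frames h fr" "p \<le> top_idx (stack_of h fr)"
  shows "cell_at h fr p = SBot \<longleftrightarrow> p = 0"
    and "cell_at h fr p = SCell Base \<longleftrightarrow> p = 1"
    and "cell_at h fr p = hist_cell e \<longleftrightarrow> 2 \<le> p \<and> p < read_bound h fr + 2 \<and> h ! (p - 2) = e"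
    and "cell_at h fr p = SCent \<longleftrightarrow> (\<exists>i m b fr'. fr = (i, m, b) # fr' \<and> p = m + 2)"
    and "cell_at h fr p = SCell (Mark i) \<longleftrightarrow> (\<exists>m fr'. fr = (i, m, True) # fr' \<and> p = m + 3)"
    and "cell_at h fr p = STop \<longleftrightarrow> p = top_idx (stack_of h fr)"
  using assms top_idx_stack_of[OF assms(1)]
  by (auto simp: cell_at_def split: list.splits if_splits)

lemma stack_of_nth_eq_iff:
  assumes "wf_frames h fr" "p \<le> top_idx (stack_of h fr)"
  shows "stack_of h fr ! p = SBot \<longleftrightarrow> p = 0"
    and "stack_of h fr ! p = SCell Base \<longleftrightarrow> p = 1"
    and "stack_of h fr ! p = hist_cell e \<longleftrightarrow> 2 \<le> p \<and> p < read_bound h fr + 2 \<and> h ! (p - 2) = e"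
    and "stack_of h fr ! p = SCent \<longleftrightarrow> (\<exists>i m b fr'. fr = (i, m, b) # fr' \<and> p = m + 2)"
    and "stack_of h fr ! p = SCell (Mark i) \<longleftrightarrow> (\<exists>m fr'. fr = (i, m, True) # fr' \<and> p = m + 3)"
    and "stack_of h fr ! p = STop \<longleftrightarrow> p = top_idx (stack_of h fr)"
  unfolding stack_of_nth[OF assms] by (rule cell_at_eq_iff[OF assms])+

lemma last_open_step_left:
  assumes "wf_frames h fr" "Suc p \<le> top_idx (stack_of h fr)"
    and "stack_of h fr ! Suc p \<noteq> hist_cell (Opn i)"
  shows "last_open i (take (min p (read_bound h fr)) h) = last_open i (take (min (p - 1) (read_bound h fr)) h)"
proof (cases "p = 0 \<or> read_bound h fr < p")
  case True
  then have "min p (read_bound h fr) = min (p - 1) (read_bound h fr)" by auto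
  then show ?thesis by simp
next
  case False
  then obtain n where p: "p = Suc n" and n: "n < read_bound h fr" by (cases p) auto
  have "h ! n \<noteq> Opn i" using assms(3) stack_of_nth_eq_iff(3)[OF assms(1,2)] p n by auto
  then show ?thesis using last_open_take_Suc[of n h i] p n read_bound_le[OF assms(1)] by (simp add: min_absorb1)
qed

definition top_sym :: "'a sym list \<Rightarrow> 'a stack_sym" where
  "top_sym h = (if h = [] then Base else Hist (last h))"

lemma stack_of_Nil_top: "stack_of h [] ! Suc (length h) = SCell (top_sym h)"
  by (cases h rule: rev_cases) (auto simp: stack_of_Nil top_sym_def nth_append)

lemma stack_move_push: "stack_move (stack_of h [], Suc (length h)) (AReplace [top_sym h, Hist e]) (stack_of (h @ [e]) [], Suc (length (h @ [e])))"
proof -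
  have t: "top_idx (stack_of h []) = length h + 2" by (rule top_idx_stack_of_Nil)
  have "take (Suc (length h)) (stack_of h []) @ map SCell [top_sym h, Hist e] @ drop (length h + 2) (stack_of h []) = stack_of (h @ [e]) []"
    by (cases h rule: rev_cases) (auto simp: stack_of_Nil top_sym_def)
  then show ?thesis using t stack_of_Nil_top[of h] by auto
qed

lemma stack_move_create:
  assumes "wf_frames h fr" "m < read_bound h fr"
  shows "stack_move (stack_of h fr, m + 2) (ACreate [Mark i]) (stack_of h ((i, m, True) # fr), m + 3)"
proof -
  have bl: "read_bound h fr \<le> length h" using read_bound_le[OF assms(1)] .
  have sp: "layout h 0 fr = map hist_cell (take m h) @ layout h m fr"
    using layout_split[of 0 m h fr] assms bl by simp
  have t: "m + 2 < top_idx (stack_of h fr)" using top_idx_stack_of[OF assms(1)] assms(2) by (auto split: list.splits)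
  have lt: "length (take m h) = m" using assms bl by simp
  show ?thesis using t lt by (simp add: stack_of_def sp)
qed

lemma stack_of_Cons_split:
  "stack_of h ((i, m, b) # fr) =
     (SBot # SCell Base # map hist_cell (take m h)) @ [SCent] @ (if b then [SCell (Mark i)] else [])
       @ [STop] @ layout h m fr"
  by (simp add: stack_of_def)

lemma append_index_shift: "length xs = n \<Longrightarrow> take (n + k) (xs @ ys) = xs @ take k ys"
  "length xs = n \<Longrightarrow> drop (n + k) (xs @ ys) = drop k ys"
  "length xs = n \<Longrightarrow> (xs @ ys) ! (n + k) = ys ! k"
  by auto

lemma stack_move_pop:
  assumes "m \<le> length h"
  shows "stack_move (stack_of h ((i, m, True) # fr), m + 3) (AReplace []) (stack_of h ((i, m, False) # fr), m + 2)"
proof -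
  have t: "top_idx (stack_of h ((i, m, True) # fr)) = m + 4" using top_idx_stack_of_Cons[OF assms] by simp
  have lt: "length (SBot # SCell Base # map hist_cell (take m h)) = m + 2" using assms by simp
  have e1: "take (m + 2 + 1) (stack_of h ((i, m, True) # fr)) = (SBot # SCell Base # map hist_cell (take m h)) @ [SCent]"
    unfolding stack_of_Cons_split append_index_shift(1)[OF lt] by simp
  have e2: "drop (m + 2 + 2) (stack_of h ((i, m, True) # fr)) = STop # layout h m fr"
    unfolding stack_of_Cons_split append_index_shift(2)[OF lt] by simp
  have e3: "stack_of h ((i, m, True) # fr) ! (m + 2 + 1) = SCell (Mark i)"
    unfolding stack_of_Cons_split append_index_shift(3)[OF lt] by simp
  have "(SBot # SCell Base # map hist_cell (take m h)) @ [SCent] @ [] @ [STop] @ layout h m fr = stack_of h ((i, m, False) # fr)"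
    by (simp add: stack_of_Cons_split)
  then show ?thesis using t e1 e2 e3 by (simp add: numeral_eq_Suc)
qed

lemma stack_move_destroy:
  assumes "wf_frames h ((i, m, b) # fr)"
  shows "stack_move (stack_of h ((i, m, False) # fr), m + 2) ADestroy (stack_of h fr, m + 2)"
proof -
  have bl: "read_bound h fr \<le> length h" using read_bound_le assms by auto
  have mb: "m < read_bound h fr" using assms by simp
  have t: "top_idx (stack_of h ((i, m, False) # fr)) = m + 3" using top_idx_stack_of_Cons[of m h i False fr] mb bl by simp
  have ml: "m \<le> length h" using mb bl by linarith
  have lt: "length (SBot # SCell Base # map hist_cell (take m h)) = m + 2" using ml by simp
  have sp: "layout h 0 fr = map hist_cell (take m h) @ layout h m fr"
    using layout_split[of 0 m h fr] mb bl by simp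
  have ne: "layout h m fr \<noteq> []" by (cases fr) auto
  have e1: "take (m + 2 + 0) (stack_of h ((i, m, False) # fr)) = (SBot # SCell Base # map hist_cell (take m h))"
    unfolding stack_of_Cons_split append_index_shift(1)[OF lt] by simp
  have e2: "drop (m + 2 + 2) (stack_of h ((i, m, False) # fr)) = layout h m fr"
    unfolding stack_of_Cons_split append_index_shift(2)[OF lt] by simp
  have e3: "stack_of h ((i, m, False) # fr) ! (m + 2 + 0) = SCent"
    unfolding stack_of_Cons_split append_index_shift(3)[OF lt] by simp
  have e4: "m + 3 < length (stack_of h ((i, m, False) # fr))" using lt ne unfolding stack_of_Cons_split by simp
  have e5: "stack_of h fr = (SBot # SCell Base # map hist_cell (take m h)) @ layout h m fr" by (simp add: stack_of_def sp)
  show ?thesis using t e1 e2 e3 e4 e5 by (simp add: numeral_eq_Suc)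
qed

section \<open>Soundness\<close>

lemma trans_stepE:
  assumes "trans_step D (q, w, s, p) C'"
  obtains q' x adv act s' p' where "C' = (q', if adv then tl w else w, s', p')"
    "(q, x, s ! p, q', adv, act) \<in> D" "x = (case w of [] \<Rightarrow> None | a # _ \<Rightarrow> Some a)"
    "adv \<longrightarrow> w \<noteq> []" "stack_move (s, p) act (s', p')"
proof -
  obtain q' w' s' p' where C': "C' = (q', w', s', p')" by (cases C')
  from assms obtain x adv act where "(q, x, s ! p, q', adv, act) \<in> D"
    "x = (case w of [] \<Rightarrow> None | a # _ \<Rightarrow> Some a)" "adv \<longrightarrow> w \<noteq> []"
    "w' = (if adv then tl w else w)" "stack_move (s, p) act (s', p')"
    unfolding trans_step_def C' prod.case by blast
  with C' that show ?thesis by blast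
qed

lemma trans_step_mono:
  assumes "D \<subseteq> D'" "trans_step D C C'"
  shows "trans_step D' C C'"
proof -
  obtain q w s p q' w' s' p' where "C = (q, w, s, p)" "C' = (q', w', s', p')" by (cases C, cases C')
  with assms show ?thesis unfolding trans_step_def prod.case by blast
qed

definition gen_inv ::
    "'a rewb \<Rightarrow> 'a list \<Rightarrow> 'a item list \<Rightarrow> 'a list \<Rightarrow> 'a stack_sym cell list \<Rightarrow> nat \<Rightarrow> bool" where
  "gen_inv \<alpha> w0 r w s p \<longleftrightarrow>
     (\<exists>h X. todo_steps [Exp \<alpha>] h r \<and> deref_rec h = Some X \<and> w0 = X @ w \<and> s = stack_of h [] \<and> p = Suc (length h))"

fun ref_label :: "'a state \<Rightarrow> nat" where
  "ref_label (Gen r) = 0"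
| "ref_label (Down io i r) = io"
| "ref_label (Read io i r) = io"
| "ref_label (Up io r) = io"
| "ref_label (Pop io r) = io"
| "ref_label (Destr io i r) = io"
| "ref_label (Skip io i r) = io"
| "ref_label (Push io r) = io"

fun resume_todo :: "'a state \<Rightarrow> 'a item list" where
  "resume_todo (Gen r) = r"
| "resume_todo (Down io i r) = r"
| "resume_todo (Read io i r) = r"
| "resume_todo (Up io r) = r"
| "resume_todo (Pop io r) = r"
| "resume_todo (Destr io i r) = r"
| "resume_todo (Skip io i r) = r"
| "resume_todo (Push io r) = r"

text \<open>
  The part of the value of the backreference under resolution that remains to be read from
  state q at position p: the rest of the innermost capture, followed by the rests of the
  enclosing ones recorded in the frames.
\<close>

fun pending_val :: "'a sym list \<Rightarrow> frames \<Rightarrow> 'a state \<Rightarrow> nat \<Rightarrow> 'a list option" where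
  "pending_val h fr (Down io j r) p = opt_append
     (case last_open j (take (min (p - 1) (read_bound h fr)) h) of
        None \<Rightarrow> Some []
      | Some q \<Rightarrow> read_capture h j (Suc q) (read_bound h fr))
     (frames_val h fr)"
| "pending_val h fr (Read io i r) p = opt_append (read_capture h i (p - 2) (read_bound h fr)) (frames_val h fr)"
| "pending_val h fr (Skip io i r) p = opt_append (read_capture h i (p - 1) (read_bound h fr)) (frames_val h fr)"
| "pending_val h fr (Up io r) p = frames_val h fr"
| "pending_val h fr (Pop io r) p = frames_val h fr"
| "pending_val h fr (Destr io i r) p = frames_val h fr"
| "pending_val h fr (Push io r) p = Some []"
| "pending_val h fr (Gen r) p = Some []"

fun pos_ok :: "'a sym list \<Rightarrow> frames \<Rightarrow> 'a state \<Rightarrow> nat \<Rightarrow> 'a list \<Rightarrow> bool" where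
  "pos_ok h fr (Down io j r) p C \<longleftrightarrow> marked fr"
| "pos_ok h fr (Read io i r) p C \<longleftrightarrow> marked fr \<and> 2 \<le> p"
| "pos_ok h fr (Skip io i r) p C \<longleftrightarrow> marked fr \<and> 2 \<le> p"
| "pos_ok h fr (Up io r) p C \<longleftrightarrow> marked fr \<and> p \<le> read_bound h fr + 2"
| "pos_ok h fr (Pop io r) p C \<longleftrightarrow> marked fr"
| "pos_ok h fr (Destr io i r) p C \<longleftrightarrow> (\<exists>m fr'. fr = (i, m, False) # fr' \<and> p = m + 2)"
| "pos_ok h fr (Push io r) p C \<longleftrightarrow> fr = [] \<and> p = Suc (length h) \<and> ref_val h io (length h) = Some C"
| "pos_ok h fr (Gen r) p C \<longleftrightarrow> True"

text \<open>
  Invariant of the dereferencing phase: the reference Num io was generated after history h,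
  the prefix C of its value has already been matched against the input, and C followed by
  the pending value is its full value.
\<close>

definition deref_inv ::
    "'a rewb \<Rightarrow> 'a list \<Rightarrow> 'a state \<Rightarrow> 'a list \<Rightarrow> 'a stack_sym cell list \<Rightarrow> nat \<Rightarrow> bool" where
  "deref_inv \<alpha> w0 q w s p \<longleftrightarrow>
     (\<exists>h rp X C fr. todo_steps [Exp \<alpha>] h rp \<and> todo_step rp [Num (ref_label q)] (resume_todo q)
        \<and> deref_rec h = Some X \<and> w0 = X @ C @ w \<and> s = stack_of h fr \<and> wf_frames h fr
        \<and> p \<le> top_idx s \<and> pos_ok h fr q p C
        \<and> (\<forall>R. pending_val h fr q p = Some R \<longrightarrow> ref_val h (ref_label q) (length h) = Some (C @ R)))"

lemma deref_invE:
  assumes "deref_inv \<alpha> w0 q w s p"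
  obtains h rp X C fr where "todo_steps [Exp \<alpha>] h rp" "todo_step rp [Num (ref_label q)] (resume_todo q)"
    "deref_rec h = Some X" "w0 = X @ C @ w" "s = stack_of h fr" "wf_frames h fr"
    "p \<le> top_idx (stack_of h fr)" "pos_ok h fr q p C"
    "\<And>R. pending_val h fr q p = Some R \<Longrightarrow> ref_val h (ref_label q) (length h) = Some (C @ R)"
  using assms unfolding deref_inv_def by blast

lemma deref_invI:
  assumes "todo_steps [Exp \<alpha>] h rp" "todo_step rp [Num (ref_label q)] (resume_todo q)"
    "deref_rec h = Some X" "w0 = X @ C @ w" "wf_frames h fr"
    "p \<le> top_idx (stack_of h fr)" "pos_ok h fr q p C"
    "\<And>R. pending_val h fr q p = Some R \<Longrightarrow> ref_val h (ref_label q) (length h) = Some (C @ R)"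
  shows "deref_inv \<alpha> w0 q w (stack_of h fr) p"
  using assms unfolding deref_inv_def by blast

fun conf_inv :: "'a rewb \<Rightarrow> 'a list \<Rightarrow> ('a state, 'a, 'a stack_sym) conf \<Rightarrow> bool" where
  "conf_inv \<alpha> w0 (Gen r, w, s, p) = gen_inv \<alpha> w0 r w s p"
| "conf_inv \<alpha> w0 (q, w, s, p) = deref_inv \<alpha> w0 q w s p"

lemma gen_inv_silent:
  assumes "gen_inv \<alpha> w0 r w s p" "todo_step r [] r'"
  shows "gen_inv \<alpha> w0 r' w s p"
  using assms todo_steps_snoc[of "[Exp \<alpha>]" _ r "[]" r'] unfolding gen_inv_def by fastforce

lemma gen_inv_push:
  assumes inv: "gen_inv \<alpha> w0 r w s p" and st: "todo_step r [e] r'" and cell: "s ! p = SCell z"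
    and sm: "stack_move (s, p) (AReplace [z, Hist e]) (s', p')"
    and val: "\<And>h. sym_val (h @ [e]) (length h) = Some Y" and w: "w = Y @ w'"
  shows "gen_inv \<alpha> w0 r' w' s' p'"
proof -
  from inv obtain h X where h: "todo_steps [Exp \<alpha>] h r" "deref_rec h = Some X" "w0 = X @ w"
    "s = stack_of h []" "p = Suc (length h)"
    by (auto simp: gen_inv_def)
  have "z = top_sym h" using cell stack_of_Nil_top[of h] h by simp
  then have "s' = stack_of (h @ [e]) [] \<and> p' = Suc (length (h @ [e]))"
    using stack_move_deterministic[OF sm] stack_move_push[of h e] h by auto
  moreover have "todo_steps [Exp \<alpha>] (h @ [e]) r'" using todo_steps_snoc[OF h(1) st] .
  moreover have "deref_rec (h @ [e]) = Some (X @ Y)" using deref_rec_snoc[of h e] h(2) val by simp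
  ultimately show ?thesis unfolding gen_inv_def using h w by auto
qed

lemma deref_inv_gen_ref:
  assumes "gen_inv \<alpha> w0 r w s p" "todo_step r [Num i] r'"
  shows "deref_inv \<alpha> w0 (Down i i r') w s p"
proof -
  from assms(1) obtain h X where h: "todo_steps [Exp \<alpha>] h r" "deref_rec h = Some X" "w0 = X @ w"
    "s = stack_of h []" "p = Suc (length h)"
    by (auto simp: gen_inv_def)
  have "pending_val h [] (Down i i r') p = ref_val h i (length h)"
    using h(5) by (simp add: ref_val_def split: option.split)
  then have "deref_inv \<alpha> w0 (Down i i r') w (stack_of h []) p"
    using h(5) top_idx_stack_of_Nil[of h]
    by (intro deref_invI[OF h(1) _ h(2), where C = "[]"]) (auto simp: h(3) assms(2) marked_def)
  with h(4) show ?thesis by simp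
qed

lemma deref_inv_down_found:
  assumes inv: "deref_inv \<alpha> w0 (Down io i r) w s p" and cell: "s ! p = hist_cell (Opn i)"
  shows "deref_inv \<alpha> w0 (Read io i r) w s (Suc p)"
proof -
  obtain h rp X C fr where d: "todo_steps [Exp \<alpha>] h rp" "todo_step rp [Num io] r"
    "deref_rec h = Some X" "w0 = X @ C @ w" "s = stack_of h fr" "wf_frames h fr"
    "p \<le> top_idx (stack_of h fr)" "marked fr"
    and val: "\<And>R. pending_val h fr (Down io i r) p = Some R \<Longrightarrow> ref_val h io (length h) = Some (C @ R)"
    using inv by (elim deref_invE) simp
  from cell obtain n where p: "p = n + 2" and n: "n < read_bound h fr" "h ! n = Opn i"
    unfolding d(5) stack_of_nth_eq_iff(3)[OF d(6,7)] by (metis add.commute le_add_diff_inverse less_diff_conv2)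
  have "last_open i (take (min (p - 1) (read_bound h fr)) h) = Some n"
    using last_open_take_Suc[of n h i] n read_bound_le[OF d(6)] p by auto
  then have "pending_val h fr (Read io i r) (Suc p) = pending_val h fr (Down io i r) p"
    using p by simp
  moreover have "Suc p \<le> top_idx (stack_of h fr)"
    using top_idx_stack_of[OF d(6)] n p by (auto split: list.splits)
  ultimately show ?thesis
    unfolding d(5) using p val by (intro deref_invI[OF d(1) _ d(3,4,6)]) (auto simp: d(2,8))
qed

lemma deref_inv_down_bottom:
  assumes inv: "deref_inv \<alpha> w0 (Down io i r) w s p" and cell: "s ! p = SBot"
  shows "deref_inv \<alpha> w0 (Up io r) w s p"
proof -
  obtain h rp X C fr where d: "todo_steps [Exp \<alpha>] h rp" "todo_step rp [Num io] r"
    "deref_rec h = Some X" "w0 = X @ C @ w" "s = stack_of h fr" "wf_frames h fr"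
    "p \<le> top_idx (stack_of h fr)" "marked fr"
    and val: "\<And>R. pending_val h fr (Down io i r) p = Some R \<Longrightarrow> ref_val h io (length h) = Some (C @ R)"
    using inv by (elim deref_invE) simp
  have "p = 0" using cell unfolding d(5) stack_of_nth_eq_iff(1)[OF d(6,7)] .
  with val show ?thesis
    unfolding d(5) by (intro deref_invI[OF d(1) _ d(3,4,6,7)]) (auto simp: d(2,8))
qed

lemma deref_inv_down_left:
  assumes inv: "deref_inv \<alpha> w0 (Down io i r) w s (Suc p)"
    and cell: "s ! Suc p \<noteq> hist_cell (Opn i)"
  shows "deref_inv \<alpha> w0 (Down io i r) w s p"
proof -
  obtain h rp X C fr where d: "todo_steps [Exp \<alpha>] h rp" "todo_step rp [Num io] r"
    "deref_rec h = Some X" "w0 = X @ C @ w" "s = stack_of h fr" "wf_frames h fr"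
    "Suc p \<le> top_idx (stack_of h fr)" "marked fr"
    and val: "\<And>R. pending_val h fr (Down io i r) (Suc p) = Some R \<Longrightarrow> ref_val h io (length h) = Some (C @ R)"
    using inv by (elim deref_invE) simp
  have "pending_val h fr (Down io i r) p = pending_val h fr (Down io i r) (Suc p)"
    using last_open_step_left[OF d(6,7)] cell d(5) by simp
  with val d(7) show ?thesis
    unfolding d(5) by (intro deref_invI[OF d(1) _ d(3,4,6)]) (auto simp: d(2,8))
qed

lemma deref_inv_read_letter:
  assumes inv: "deref_inv \<alpha> w0 (Read io i r) (a # w) s p" and cell: "s ! p = hist_cell (Ch a)"
  shows "deref_inv \<alpha> w0 (Read io i r) w s (Suc p)"
proof -
  obtain h rp X C fr where d: "todo_steps [Exp \<alpha>] h rp" "todo_step rp [Num io] r"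
    "deref_rec h = Some X" "w0 = X @ C @ a # w" "s = stack_of h fr" "wf_frames h fr"
    "p \<le> top_idx (stack_of h fr)" "marked fr"
    and val: "\<And>R. pending_val h fr (Read io i r) p = Some R \<Longrightarrow> ref_val h io (length h) = Some (C @ R)"
    using inv by (elim deref_invE) simp
  from cell obtain n where p: "p = n + 2" and n: "n < read_bound h fr" "h ! n = Ch a"
    unfolding d(5) stack_of_nth_eq_iff(3)[OF d(6,7)] by (metis add.commute le_add_diff_inverse less_diff_conv2)
  have "read_capture h i n (read_bound h fr) = map_option ((#) a) (read_capture h i (Suc n) (read_bound h fr))"
    using read_capture_unfold[of n "read_bound h fr" h i] n read_bound_le[OF d(6)] by simp
  then have "pending_val h fr (Read io i r) (Suc p) = Some R \<Longrightarrow> pending_val h fr (Read io i r) p = Some (a # R)" for R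
    using p by (auto simp: opt_append_eq_Some_iff)
  moreover have "Suc p \<le> top_idx (stack_of h fr)"
    using top_idx_stack_of[OF d(6)] n p by (auto split: list.splits)
  ultimately show ?thesis
    unfolding d(5) using val p by (intro deref_invI[OF d(1) _ d(3), where C = "C @ [a]"]) (auto simp: d(2,4,6,8))
qed

lemma deref_inv_read_bracket:
  assumes inv: "deref_inv \<alpha> w0 (Read io i r) w s p" and cell: "s ! p = hist_cell e"
    and e: "e = Opn j \<or> (e = Cls j \<and> j \<noteq> i)"
  shows "deref_inv \<alpha> w0 (Read io i r) w s (Suc p)"
proof -
  obtain h rp X C fr where d: "todo_steps [Exp \<alpha>] h rp" "todo_step rp [Num io] r"
    "deref_rec h = Some X" "w0 = X @ C @ w" "s = stack_of h fr" "wf_frames h fr"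
    "p \<le> top_idx (stack_of h fr)" "marked fr"
    and val: "\<And>R. pending_val h fr (Read io i r) p = Some R \<Longrightarrow> ref_val h io (length h) = Some (C @ R)"
    using inv by (elim deref_invE) simp
  from cell obtain n where p: "p = n + 2" and n: "n < read_bound h fr" "h ! n = e"
    unfolding d(5) stack_of_nth_eq_iff(3)[OF d(6,7)] by (metis add.commute le_add_diff_inverse less_diff_conv2)
  have "read_capture h i n (read_bound h fr) = read_capture h i (Suc n) (read_bound h fr)"
    using read_capture_unfold[of n "read_bound h fr" h i] n read_bound_le[OF d(6)] e by auto
  then have "pending_val h fr (Read io i r) (Suc p) = pending_val h fr (Read io i r) p"
    using p by simp
  moreover have "Suc p \<le> top_idx (stack_of h fr)"
    using top_idx_stack_of[OF d(6)] n p by (auto split: list.splits)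
  ultimately show ?thesis
    unfolding d(5) using val p by (intro deref_invI[OF d(1) _ d(3,4,6)]) (auto simp: d(2,8))
qed

lemma deref_inv_read_end:
  assumes inv: "deref_inv \<alpha> w0 (Read io i r) w s p" and cell: "s ! p = hist_cell (Cls i)"
  shows "deref_inv \<alpha> w0 (Up io r) w s p"
proof -
  obtain h rp X C fr where d: "todo_steps [Exp \<alpha>] h rp" "todo_step rp [Num io] r"
    "deref_rec h = Some X" "w0 = X @ C @ w" "s = stack_of h fr" "wf_frames h fr"
    "p \<le> top_idx (stack_of h fr)" "marked fr"
    and val: "\<And>R. pending_val h fr (Read io i r) p = Some R \<Longrightarrow> ref_val h io (length h) = Some (C @ R)"
    using inv by (elim deref_invE) simp
  from cell obtain n where p: "p = n + 2" and n: "n < read_bound h fr" "h ! n = Cls i"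
    unfolding d(5) stack_of_nth_eq_iff(3)[OF d(6,7)] by (metis add.commute le_add_diff_inverse less_diff_conv2)
  have "read_capture h i n (read_bound h fr) = Some []"
    using read_capture_unfold[of n "read_bound h fr" h i] n read_bound_le[OF d(6)] by simp
  with val p n show ?thesis
    unfolding d(5) by (intro deref_invI[OF d(1) _ d(3,4,6,7)]) (auto simp: d(2,8))
qed

lemma deref_inv_read_ref:
  assumes inv: "deref_inv \<alpha> w0 (Read io i r) w s p" and cell: "s ! p = hist_cell (Num j)"
    and sm: "stack_move (s, p) (ACreate [Mark i]) (s', p')"
  shows "deref_inv \<alpha> w0 (Down io j r) w s' p'"
proof -
  obtain h rp X C fr where d: "todo_steps [Exp \<alpha>] h rp" "todo_step rp [Num io] r"
    "deref_rec h = Some X" "w0 = X @ C @ w" "s = stack_of h fr" "wf_frames h fr"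
    "p \<le> top_idx (stack_of h fr)" "marked fr"
    and val: "\<And>R. pending_val h fr (Read io i r) p = Some R \<Longrightarrow> ref_val h io (length h) = Some (C @ R)"
    using inv by (elim deref_invE) simp
  from cell obtain n where p: "p = n + 2" and n: "n < read_bound h fr" "h ! n = Num j"
    unfolding d(5) stack_of_nth_eq_iff(3)[OF d(6,7)] by (metis add.commute le_add_diff_inverse less_diff_conv2)
  let ?fr = "(i, n, True) # fr"
  have s': "s' = stack_of h ?fr" "p' = n + 3"
    using stack_move_deterministic[OF sm[unfolded d(5) p] stack_move_create[OF d(6) n(1)]] by auto
  have wf: "wf_frames h ?fr" and mk: "marked ?fr" using d(6,8) n by (auto simp: marked_def)
  have "read_capture h i n (read_bound h fr) =
      opt_append (ref_val h j n) (read_capture h i (Suc n) (read_bound h fr))"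
    using read_capture_unfold[of n "read_bound h fr" h i] n read_bound_le[OF d(6)] by simp
  then have "pending_val h ?fr (Down io j r) p' = pending_val h fr (Read io i r) p"
    using s' p by (simp add: ref_val_def opt_append_assoc split: option.split)
  moreover have "p' \<le> top_idx (stack_of h ?fr)"
    using s' top_idx_stack_of_Cons[of n h] n read_bound_le[OF d(6)] by simp
  ultimately show ?thesis
    unfolding s'(1) using val by (intro deref_invI[OF d(1) _ d(3,4) wf]) (auto simp: d(2) mk s'(2))
qed

lemma deref_inv_up_right:
  assumes inv: "deref_inv \<alpha> w0 (Up io r) w s p"
    and cell: "s ! p = SBot \<or> s ! p = SCell Base \<or> s ! p = hist_cell e"
  shows "deref_inv \<alpha> w0 (Up io r) w s (Suc p)"
proof -
  obtain h rp X C fr where d: "todo_steps [Exp \<alpha>] h rp" "todo_step rp [Num io] r"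
    "deref_rec h = Some X" "w0 = X @ C @ w" "s = stack_of h fr" "wf_frames h fr"
    "p \<le> top_idx (stack_of h fr)" "marked fr" "p \<le> read_bound h fr + 2"
    and val: "\<And>R. pending_val h fr (Up io r) p = Some R \<Longrightarrow> ref_val h io (length h) = Some (C @ R)"
    using inv by (elim deref_invE) simp
  have "p < read_bound h fr + 2"
    using cell unfolding d(5) stack_of_nth_eq_iff(1-3)[OF d(6,7)] by auto
  moreover have "read_bound h fr + 2 \<le> top_idx (stack_of h fr)"
    using top_idx_stack_of[OF d(6)] by (auto split: list.splits)
  ultimately show ?thesis
    unfolding d(5) using val by (intro deref_invI[OF d(1) _ d(3,4,6)]) (auto simp: d(2,8))
qed

lemma deref_inv_up_cent:
  assumes inv: "deref_inv \<alpha> w0 (Up io r) w s p" and cell: "s ! p = SCent"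
  shows "deref_inv \<alpha> w0 (Pop io r) w s (Suc p)"
proof -
  obtain h rp X C fr where d: "todo_steps [Exp \<alpha>] h rp" "todo_step rp [Num io] r"
    "deref_rec h = Some X" "w0 = X @ C @ w" "s = stack_of h fr" "wf_frames h fr"
    "p \<le> top_idx (stack_of h fr)" "marked fr"
    and val: "\<And>R. pending_val h fr (Up io r) p = Some R \<Longrightarrow> ref_val h io (length h) = Some (C @ R)"
    using inv by (elim deref_invE) simp
  from cell obtain i m b fr' where fr: "fr = (i, m, b) # fr'" and p: "p = m + 2"
    unfolding d(5) stack_of_nth_eq_iff(4)[OF d(6,7)] by blast
  have "b" "m \<le> length h" using d(6,8) fr read_bound_le[of h fr'] by (auto simp: marked_def)
  then have "Suc p \<le> top_idx (stack_of h fr)" using top_idx_stack_of_Cons[of m h i b fr'] fr p by simp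
  with val show ?thesis
    unfolding d(5) by (intro deref_invI[OF d(1) _ d(3,4,6)]) (auto simp: d(2,8))
qed

lemma deref_inv_up_top:
  assumes inv: "deref_inv \<alpha> w0 (Up io r) w s p" and cell: "s ! p = STop"
  shows "deref_inv \<alpha> w0 (Push io r) w s (p - 1)"
proof -
  obtain h rp X C fr where d: "todo_steps [Exp \<alpha>] h rp" "todo_step rp [Num io] r"
    "deref_rec h = Some X" "w0 = X @ C @ w" "s = stack_of h fr" "wf_frames h fr"
    "p \<le> top_idx (stack_of h fr)" "p \<le> read_bound h fr + 2"
    and val: "\<And>R. pending_val h fr (Up io r) p = Some R \<Longrightarrow> ref_val h io (length h) = Some (C @ R)"
    using inv by (elim deref_invE) simp
  have "p = top_idx (stack_of h fr)" using cell unfolding d(5) stack_of_nth_eq_iff(6)[OF d(6,7)] .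
  then have fr: "fr = []" and p: "p = length h + 2"
    using d(8) top_idx_stack_of[OF d(6)] top_idx_stack_of_Nil[of h] by (auto split: list.splits if_splits)
  with val show ?thesis
    unfolding d(5) by (intro deref_invI[OF d(1) _ d(3,4,6)]) (auto simp: d(2) top_idx_stack_of_Nil)
qed

text \<open>
  Leaving a nested backreference: the mark records which capture was being read when the
  nested reference was met, and reading it resumes just after that reference.
\<close>

lemma deref_inv_pop:
  assumes inv: "deref_inv \<alpha> w0 (Pop io r) w s p" and cell: "s ! p = SCell (Mark i)"
    and sm: "stack_move (s, p) (AReplace []) (s', p')"
  shows "deref_inv \<alpha> w0 (Destr io i r) w s' p'"
proof -
  obtain h rp X C fr where d: "todo_steps [Exp \<alpha>] h rp" "todo_step rp [Num io] r"
    "deref_rec h = Some X" "w0 = X @ C @ w" "s = stack_of h fr" "wf_frames h fr"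
    "p \<le> top_idx (stack_of h fr)"
    and val: "\<And>R. pending_val h fr (Pop io r) p = Some R \<Longrightarrow> ref_val h io (length h) = Some (C @ R)"
    using inv by (elim deref_invE) simp
  from cell obtain m fr' where fr: "fr = (i, m, True) # fr'" and p: "p = m + 3"
    unfolding d(5) stack_of_nth_eq_iff(5)[OF d(6,7)] by blast
  have m: "m \<le> length h" using d(6) fr read_bound_le[of h fr'] by auto
  have s': "s' = stack_of h ((i, m, False) # fr')" "p' = m + 2"
    using stack_move_deterministic[OF sm[unfolded d(5) fr p] stack_move_pop[OF m]] by auto
  have "wf_frames h ((i, m, False) # fr')" using d(6) fr by simp
  with val fr show ?thesis
    unfolding s' using top_idx_stack_of_Cons[OF m]
    by (intro deref_invI[OF d(1) _ d(3,4)]) (auto simp: d(2))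
qed

lemma deref_inv_destroy:
  assumes inv: "deref_inv \<alpha> w0 (Destr io i r) w s p" and sm: "stack_move (s, p) ADestroy (s', p')"
  shows "deref_inv \<alpha> w0 (Skip io i r) w s' p'"
proof -
  obtain h rp X C fr where d: "todo_steps [Exp \<alpha>] h rp" "todo_step rp [Num io] r"
    "deref_rec h = Some X" "w0 = X @ C @ w" "s = stack_of h fr" "wf_frames h fr"
    and pos: "\<exists>m fr'. fr = (i, m, False) # fr' \<and> p = m + 2"
    and val: "\<And>R. pending_val h fr (Destr io i r) p = Some R \<Longrightarrow> ref_val h io (length h) = Some (C @ R)"
    using inv by (elim deref_invE) simp
  from pos obtain m fr' where fr: "fr = (i, m, False) # fr'" and p: "p = m + 2" by blast
  have s': "s' = stack_of h fr'" "p' = m + 2"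
    using stack_move_deterministic[OF sm[unfolded d(5) fr p] stack_move_destroy[OF d(6)[unfolded fr]]]
    by auto
  have wf: "wf_frames h fr'" and mk: "marked fr'" and m: "m < read_bound h fr'"
    using d(6) fr by auto
  have "p' \<le> top_idx (stack_of h fr')" using s' top_idx_stack_of[OF wf] m by (auto split: list.splits)
  with val fr p mk show ?thesis
    unfolding s'(1) by (intro deref_invI[OF d(1) _ d(3,4) wf]) (auto simp: d(2) s'(2))
qed

lemma deref_inv_skip:
  assumes inv: "deref_inv \<alpha> w0 (Skip io i r) w s p" and cell: "s ! p = hist_cell (Num j)"
  shows "deref_inv \<alpha> w0 (Read io i r) w s (Suc p)"
proof -
  obtain h rp X C fr where d: "todo_steps [Exp \<alpha>] h rp" "todo_step rp [Num io] r"
    "deref_rec h = Some X" "w0 = X @ C @ w" "s = stack_of h fr" "wf_frames h fr"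
    "p \<le> top_idx (stack_of h fr)" "marked fr"
    and val: "\<And>R. pending_val h fr (Skip io i r) p = Some R \<Longrightarrow> ref_val h io (length h) = Some (C @ R)"
    using inv by (elim deref_invE) simp
  from cell have p: "2 \<le> p" "p < read_bound h fr + 2"
    unfolding d(5) stack_of_nth_eq_iff(3)[OF d(6,7)] by auto
  then have "Suc p \<le> top_idx (stack_of h fr)" using top_idx_stack_of[OF d(6)] by (auto split: list.splits)
  with val p show ?thesis
    unfolding d(5) by (intro deref_invI[OF d(1) _ d(3,4,6)]) (auto simp: d(2,8))
qed

lemma gen_inv_push_ref:
  assumes inv: "deref_inv \<alpha> w0 (Push io r) w s p" and cell: "s ! p = SCell z"
    and sm: "stack_move (s, p) (AReplace [z, Hist (Num io)]) (s', p')"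
  shows "gen_inv \<alpha> w0 r w s' p'"
proof -
  obtain h rp X C where d: "todo_steps [Exp \<alpha>] h rp" "todo_step rp [Num io] r"
    "deref_rec h = Some X" "w0 = X @ C @ w" "s = stack_of h []" "p = Suc (length h)"
    "ref_val h io (length h) = Some C"
    using inv by (elim deref_invE) simp
  have "z = top_sym h" using cell stack_of_Nil_top[of h] d by simp
  with sm d(5,6) have "stack_move (stack_of h [], Suc (length h)) (AReplace [top_sym h, Hist (Num io)]) (s', p')"
    by simp
  from stack_move_deterministic[OF this stack_move_push]
  have "s' = stack_of (h @ [Num io]) [] \<and> p' = Suc (length (h @ [Num io]))" by simp
  moreover have "todo_steps [Exp \<alpha>] (h @ [Num io]) r" using todo_steps_snoc[OF d(1,2)] .
  moreover have "deref_rec (h @ [Num io]) = Some (X @ C)"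
    using deref_rec_snoc[of h "Num io"] d(3,7) sym_val_snoc[of h "Num io"] by simp
  ultimately show ?thesis unfolding gen_inv_def using d(4) by auto
qed

lemma conf_inv_step:
  assumes inv: "conf_inv \<alpha> w0 C" and step: "trans_step moves C C'"
  shows "conf_inv \<alpha> w0 C'"
proof -
  obtain q w s p where C: "C = (q, w, s, p)" by (cases C)
  from step[unfolded C] obtain q' x adv act s' p' where C': "C' = (q', if adv then tl w else w, s', p')"
    and mv: "(q, x, s ! p, q', adv, act) \<in> moves" and x: "x = (case w of [] \<Rightarrow> None | a # _ \<Rightarrow> Some a)"
    and adv: "adv \<longrightarrow> w \<noteq> []" and sm: "stack_move (s, p) act (s', p')"
    by (rule trans_stepE)
  have sym_val_Ch: "sym_val (h @ [Ch a]) (length h) = Some [a]" for h :: "'a sym list" and a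
    by (simp add: sym_val_snoc)
  have sym_val_bracket: "sym_val (h @ [e]) (length h) = Some []" if "e = Opn j \<or> e = Cls j"
    for h :: "'a sym list" and e j
    using that by (auto simp: sym_val_snoc)
  from inv have inv: "conf_inv \<alpha> w0 (q, w, s, p)" unfolding C .
  from mv have "conf_inv \<alpha> w0 (q', if adv then tl w else w, s', p')"
  proof (cases rule: moves.cases)
    case gen_silent then show ?thesis using inv sm by (auto intro: gen_inv_silent)
  next
    case (gen_letter r a r' z)
    then show ?thesis using inv x adv sm by (cases w) (auto intro: gen_inv_push[OF _ _ _ _ sym_val_Ch])
  next
    case gen_open then show ?thesis using inv sm by (auto intro: gen_inv_push[OF _ _ _ _ sym_val_bracket])
  next
    case gen_close then show ?thesis using inv sm by (auto intro: gen_inv_push[OF _ _ _ _ sym_val_bracket])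
  next
    case gen_ref then show ?thesis using inv sm by (auto intro: deref_inv_gen_ref)
  next
    case down_found then show ?thesis using inv sm by (auto intro: deref_inv_down_found)
  next
    case down_bottom then show ?thesis using inv sm by (auto intro: deref_inv_down_bottom)
  next
    case down_left then show ?thesis using inv sm by (cases p) (auto intro: deref_inv_down_left)
  next
    case (read_letter io i r a)
    then show ?thesis using inv x adv sm by (cases w) (auto intro: deref_inv_read_letter)
  next
    case read_open then show ?thesis using inv sm by (auto intro: deref_inv_read_bracket)
  next
    case read_close then show ?thesis using inv sm by (auto intro: deref_inv_read_bracket)
  next
    case read_end then show ?thesis using inv sm by (auto intro: deref_inv_read_end)
  next
    case read_ref then show ?thesis using inv sm by (auto intro: deref_inv_read_ref)
  next
    case up_bottom then show ?thesis using inv sm by (auto intro: deref_inv_up_right)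
  next
    case up_base then show ?thesis using inv sm by (auto intro: deref_inv_up_right)
  next
    case up_hist then show ?thesis using inv sm by (auto intro: deref_inv_up_right)
  next
    case up_cent then show ?thesis using inv sm by (auto intro: deref_inv_up_cent)
  next
    case up_top then show ?thesis using inv sm by (auto intro: deref_inv_up_top simp del: One_nat_def)
  next
    case pop_mark then show ?thesis using inv sm by (auto intro: deref_inv_pop)
  next
    case destroy then show ?thesis using inv sm by (auto intro: deref_inv_destroy)
  next
    case skip then show ?thesis using inv sm by (auto intro: deref_inv_skip)
  next
    case push then show ?thesis using inv sm by (auto intro: gen_inv_push_ref)
  qed
  then show ?thesis unfolding C' .
qed

lemma rewb_trans_subset_moves: "rewb_trans \<alpha> \<subseteq> moves"
  by (auto simp: rewb_trans_def)

theorem trans_lang_rewb_trans_subset: "trans_lang (rewb_trans \<alpha>) (Gen [Exp \<alpha>]) Base {Gen []} \<subseteq> rewb_lang \<alpha>"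
proof
  fix w0 assume "w0 \<in> trans_lang (rewb_trans \<alpha>) (Gen [Exp \<alpha>]) Base {Gen []}"
  then obtain s n where run: "(trans_step (rewb_trans \<alpha>))\<^sup>*\<^sup>* (Gen [Exp \<alpha>], w0, [SBot, SCell Base, STop], 1) (Gen [], [], s, n)"
    by (auto simp: trans_lang_def)
  have init: "conf_inv \<alpha> w0 (Gen [Exp \<alpha>], w0, [SBot, SCell Base, STop], 1)"
    unfolding conf_inv.simps unfolding gen_inv_def
    by (auto intro!: exI[of _ "[]"] steps_refl simp: stack_of_Nil deref_rec_def)
  from run have "conf_inv \<alpha> w0 (Gen [], [], s, n)"
  proof (induct rule: rtranclp_induct)
    case (step C C')
    then show ?case using conf_inv_step trans_step_mono[OF rewb_trans_subset_moves] by blast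
  qed (fact init)
  then obtain h where "todo_steps [Exp \<alpha>] h []" "deref_rec h = Some w0"
    by (auto simp: gen_inv_def)
  then show "w0 \<in> rewb_lang \<alpha>"
    unfolding rewb_lang_def todo_steps_iff_rlang deref_eq_deref_rec by blast
qed

section \<open>Completeness\<close>

abbreviation rewb_run ::
    "'a rewb \<Rightarrow> ('a state, 'a, 'a stack_sym) conf \<Rightarrow> ('a state, 'a, 'a stack_sym) conf \<Rightarrow> bool" where
  "rewb_run \<alpha> \<equiv> (trans_step (rewb_trans \<alpha>))\<^sup>*\<^sup>*"

definition labels_ok :: "'a rewb \<Rightarrow> 'a sym list \<Rightarrow> frames \<Rightarrow> bool" where
  "labels_ok \<alpha> h fr \<longleftrightarrow> set h \<subseteq> syms_of \<alpha> \<and> (\<forall>(i, m, b) \<in> set fr. i \<in> labels \<alpha>)"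

lemma less_length_stack_of: "p \<le> top_idx (stack_of h fr) \<Longrightarrow> p < length (stack_of h fr)"
proof -
  have "STop \<in> set (stack_of h fr)" by (cases fr) (auto simp: stack_of_def)
  then show "p \<le> top_idx (stack_of h fr) \<Longrightarrow> p < length (stack_of h fr)"
    using top_idx_less_length_iff[of "stack_of h fr"] by simp
qed

lemma stack_of_nth_in_cells:
  assumes "labels_ok \<alpha> h fr" "wf_frames h fr" "p \<le> top_idx (stack_of h fr)"
  shows "stack_of h fr ! p \<in> cells_of (stack_syms \<alpha>)"
proof -
  have "p - 2 < read_bound h fr \<Longrightarrow> h ! (p - 2) \<in> syms_of \<alpha>"
    using assms(1) read_bound_le[OF assms(2)] by (auto simp: labels_ok_def)
  moreover have "\<And>i m b fr'. fr = (i, m, b) # fr' \<Longrightarrow> i \<in> labels \<alpha>"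
    using assms(1) by (auto simp: labels_ok_def)
  ultimately have "cell_at h fr p \<in> cells_of (stack_syms \<alpha>)"
    unfolding cell_at_def stack_syms_def cells_of_def by (auto split: list.splits)
  then show ?thesis using stack_of_nth[OF assms(2,3)] by simp
qed

lemma short_acts_intros:
  "AStay \<in> short_acts G" "ALeft \<in> short_acts G" "ARight \<in> short_acts G" "ADestroy \<in> short_acts G"
  "AReplace [] \<in> short_acts G" "z \<in> G \<Longrightarrow> g \<in> G \<Longrightarrow> AReplace [z, g] \<in> short_acts G"
  "g \<in> G \<Longrightarrow> ACreate [g] \<in> short_acts G"
  by (auto simp: short_acts_def)

lemma rewb_trans_stepI:
  assumes "(q, x, c, q', adv, act) \<in> moves" "state_ok \<alpha> q" "state_ok \<alpha> q'"
    "c \<in> cells_of (stack_syms \<alpha>)" "act \<in> short_acts (stack_syms \<alpha>)" "s ! p = c" "p < length s"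
    "x = (case w of [] \<Rightarrow> None | a # _ \<Rightarrow> Some a)" "adv \<longrightarrow> w \<noteq> []"
    "stack_move (s, p) act (s', p')" "w' = (if adv then tl w else w)"
  shows "trans_step (rewb_trans \<alpha>) (q, w, s, p) (q', w', s', p')"
proof -
  have "(q, x, c, q', adv, act) \<in> rewb_trans \<alpha>"
    using assms(1-5) by (auto simp: rewb_trans_def states_of_def)
  then show ?thesis using assms(6-11) unfolding trans_step_def by auto
qed

definition Up_target ::
    "nat \<Rightarrow> 'a item list \<Rightarrow> 'a list \<Rightarrow> 'a sym list \<Rightarrow> frames \<Rightarrow> ('a state, 'a, 'a stack_sym) conf" where
  "Up_target io r w h fr = (case fr of
       [] \<Rightarrow> (Push io r, w, stack_of h fr, Suc (length h))
     | (i, m, b) # _ \<Rightarrow> (Pop io r, w, stack_of h fr, m + 3))"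

context
  fixes \<alpha> :: "'a rewb" and io :: nat and r :: "'a item list"
  assumes io: "io \<in> labels \<alpha>" and r: "r \<in> reachable_todos \<alpha>"
begin

lemma Down_run:
  assumes wf: "wf_frames h fr" and ok: "labels_ok \<alpha> h fr" and j: "j \<in> labels \<alpha>"
  shows "p < top_idx (stack_of h fr) \<Longrightarrow> rewb_run \<alpha> (Down io j r, w, stack_of h fr, p)
    (case last_open j (take (min (p - 1) (read_bound h fr)) h) of
       None \<Rightarrow> (Up io r, w, stack_of h fr, 0)
     | Some q \<Rightarrow> (Read io j r, w, stack_of h fr, q + 3))"
proof (induct p)
  case 0
  have "stack_of h fr ! 0 = SBot" using stack_of_nth_eq_iff(1)[OF wf] by simp
  then have "trans_step (rewb_trans \<alpha>) (Down io j r, w, stack_of h fr, 0) (Up io r, w, stack_of h fr, 0)"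
    using io j r less_length_stack_of[of 0 h fr]
    by (intro rewb_trans_stepI[OF moves.down_bottom]) (auto simp: short_acts_intros cells_of_def)
  then show ?case by simp
next
  case (Suc p)
  have le: "Suc p \<le> top_idx (stack_of h fr)" using Suc.prems by simp
  note cell = stack_of_nth_eq_iff[OF wf le] and cell_ok = stack_of_nth_in_cells[OF ok wf le]
  show ?case
  proof (cases "stack_of h fr ! Suc p = hist_cell (Opn j)")
    case True
    then obtain n where p: "p = Suc n" and n: "n < read_bound h fr" "h ! n = Opn j"
      unfolding cell(3) by (cases p) auto
    then have "last_open j (take (min (Suc p - 1) (read_bound h fr)) h) = Some n"
      using last_open_take_Suc[of n h j] read_bound_le[OF wf] by (simp add: min_absorb1)
    moreover have "trans_step (rewb_trans \<alpha>) (Down io j r, w, stack_of h fr, Suc p) (Read io j r, w, stack_of h fr, n + 3)"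
      using True io j r Suc.prems less_length_stack_of[OF le] cell_ok p
      by (intro rewb_trans_stepI[OF moves.down_found]) (auto simp: short_acts_intros)
    ultimately show ?thesis by simp
  next
    case False
    moreover have "stack_of h fr ! Suc p \<noteq> SBot" "stack_of h fr ! Suc p \<noteq> STop"
      using cell(1,6) Suc.prems by auto
    ultimately have "trans_step (rewb_trans \<alpha>) (Down io j r, w, stack_of h fr, Suc p) (Down io j r, w, stack_of h fr, p)"
      using io j r less_length_stack_of[OF le] cell_ok
        stack_move.simps(2)[of "stack_of h fr" "Suc p" "stack_of h fr" p] le
      by (intro rewb_trans_stepI[OF moves.down_left]) (simp_all add: short_acts_intros)
    moreover have "last_open j (take (min (Suc p - 1) (read_bound h fr)) h) = last_open j (take (min (p - 1) (read_bound h fr)) h)"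
      using last_open_step_left[OF wf le False] by simp
    ultimately show ?thesis using Suc by (auto intro: converse_rtranclp_into_rtranclp)
  qed
qed

lemma Up_run:
  assumes wf: "wf_frames h fr" and ok: "labels_ok \<alpha> h fr" and mk: "marked fr"
  shows "p \<le> read_bound h fr + 2 \<Longrightarrow> rewb_run \<alpha> (Up io r, w, stack_of h fr, p) (Up_target io r w h fr)"
proof (induct "read_bound h fr + 2 - p" arbitrary: p)
  case 0
  then have p: "p = read_bound h fr + 2" by simp
  have le: "p \<le> top_idx (stack_of h fr)" using top_idx_stack_of[OF wf] p by (auto split: list.splits)
  note cell = stack_of_nth_eq_iff[OF wf le]
  show ?case
  proof (cases fr)
    case Nil
    then have "stack_of h fr ! p = STop" using cell(6) p top_idx_stack_of_Nil[of h] by simp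
    then have "trans_step (rewb_trans \<alpha>) (Up io r, w, stack_of h fr, p) (Push io r, w, stack_of h fr, p - 1)"
      using io r le less_length_stack_of[OF le] p
      by (intro rewb_trans_stepI[OF moves.up_top]) (auto simp: short_acts_intros cells_of_def)
    then show ?thesis using Nil p by (simp add: Up_target_def)
  next
    case (Cons f fr')
    obtain i m b where f: "f = (i, m, b)" by (cases f)
    have "stack_of h fr ! p = SCent" using cell(4) p Cons f by simp
    moreover have "p < top_idx (stack_of h fr)"
      using mk Cons f p top_idx_stack_of[OF wf] by (simp add: marked_def)
    ultimately have "trans_step (rewb_trans \<alpha>) (Up io r, w, stack_of h fr, p) (Pop io r, w, stack_of h fr, Suc p)"
      using io r less_length_stack_of[OF le]
      by (intro rewb_trans_stepI[OF moves.up_cent]) (auto simp: short_acts_intros cells_of_def)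
    then show ?thesis using Cons f p by (simp add: Up_target_def numeral_eq_Suc r_into_rtranclp)
  qed
next
  case (Suc d)
  then have p: "p < read_bound h fr + 2" by simp
  then have lt: "p < top_idx (stack_of h fr)" using top_idx_stack_of[OF wf] by (auto split: list.splits)
  then have le: "p \<le> top_idx (stack_of h fr)" by simp
  note cell = stack_of_nth_eq_iff[OF wf le]
  have "trans_step (rewb_trans \<alpha>) (Up io r, w, stack_of h fr, p) (Up io r, w, stack_of h fr, Suc p)"
  proof -
    note facts = io r lt less_length_stack_of[OF le] stack_of_nth_in_cells[OF ok wf le]
    consider "p = 0" | "p = 1" | "2 \<le> p" by arith
    then show ?thesis
    proof cases
      case 1
      with cell(1) facts show ?thesis
        by (intro rewb_trans_stepI[OF moves.up_bottom]) (auto simp: short_acts_intros)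
    next
      case 2
      with cell(2) facts show ?thesis
        by (intro rewb_trans_stepI[OF moves.up_base]) (auto simp: short_acts_intros)
    next
      case 3
      with cell(3)[of "h ! (p - 2)"] p facts show ?thesis
        by (intro rewb_trans_stepI[OF moves.up_hist]) (auto simp: short_acts_intros)
    qed
  qed
  moreover have "rewb_run \<alpha> (Up io r, w, stack_of h fr, Suc p) (Up_target io r w h fr)"
    using Suc p by simp
  ultimately show ?case by (rule converse_rtranclp_into_rtranclp)
qed

lemma return_run:
  assumes wf: "wf_frames h ((i, n, True) # fr)" and ok: "labels_ok \<alpha> h fr" and i: "i \<in> labels \<alpha>"
  shows "rewb_run \<alpha> (Pop io r, w, stack_of h ((i, n, True) # fr), n + 3) (Read io i r, w, stack_of h fr, n + 3)"
proof -
  let ?fr1 = "(i, n, True) # fr" and ?fr0 = "(i, n, False) # fr"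
  from wf obtain j where n: "n < read_bound h fr" "h ! n = Num j" and wf': "wf_frames h fr"
    by auto
  have nl: "n \<le> length h" using n read_bound_le[OF wf'] by simp
  have top1: "top_idx (stack_of h ?fr1) = n + 4" and top0: "top_idx (stack_of h ?fr0) = n + 3"
    using top_idx_stack_of_Cons[OF nl] by simp_all
  have wf0: "wf_frames h ?fr0" using wf by simp
  have "stack_of h ?fr1 ! (n + 3) = SCell (Mark i)" using stack_of_nth_eq_iff(5)[OF wf] top1 by simp
  then have pop: "trans_step (rewb_trans \<alpha>) (Pop io r, w, stack_of h ?fr1, n + 3) (Destr io i r, w, stack_of h ?fr0, n + 2)"
    using io i r top1 less_length_stack_of[of "n + 3" h ?fr1] stack_move_pop[OF nl, of i fr]
    by (intro rewb_trans_stepI[OF moves.pop_mark]) (auto simp: short_acts_intros stack_syms_def cells_of_def)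
  have "stack_of h ?fr0 ! (n + 2) = SCent" using stack_of_nth_eq_iff(4)[OF wf0, of "n + 2"] top0 by auto
  then have destroy: "trans_step (rewb_trans \<alpha>) (Destr io i r, w, stack_of h ?fr0, n + 2) (Skip io i r, w, stack_of h fr, n + 2)"
    using io i r top0 less_length_stack_of[of "n + 2" h ?fr0] stack_move_destroy[OF wf]
    by (intro rewb_trans_stepI[OF moves.destroy]) (auto simp: short_acts_intros cells_of_def)
  have lt: "n + 2 < top_idx (stack_of h fr)" using top_idx_stack_of[OF wf'] n by (auto split: list.splits)
  then have "stack_of h fr ! (n + 2) = hist_cell (Num j)" using stack_of_nth_eq_iff(3)[OF wf'] n by simp
  moreover have "stack_of h fr ! (n + 2) \<in> cells_of (stack_syms \<alpha>)"
    using stack_of_nth_in_cells[OF ok wf'] lt by simp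
  ultimately have skip: "trans_step (rewb_trans \<alpha>) (Skip io i r, w, stack_of h fr, n + 2) (Read io i r, w, stack_of h fr, n + 3)"
    using io i r lt less_length_stack_of[of "n + 2" h fr]
    by (intro rewb_trans_stepI[OF moves.skip]) (auto simp: short_acts_intros)
  from pop destroy skip show ?thesis
    by (blast intro: converse_rtranclp_into_rtranclp)
qed

text \<open>
  The run reading the capture is taken as a hypothesis, so that the lemma serves both for
  a top-level reference and, inside the induction of Read_run, for nested ones.
\<close>

lemma resolve_run:
  assumes wf: "wf_frames h fr" and ok: "labels_ok \<alpha> h fr" and mk: "marked fr" and j: "j \<in> labels \<alpha>"
    and val: "ref_val h j (read_bound h fr) = Some V"
    and read: "\<And>q. last_open j (take (read_bound h fr) h) = Some q \<Longrightarrow>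
      read_capture h j (Suc q) (read_bound h fr) = Some V \<Longrightarrow>
      \<exists>p' \<le> read_bound h fr + 2. rewb_run \<alpha> (Read io j r, V @ w, stack_of h fr, q + 3) (Up io r, w, stack_of h fr, p')"
  shows "rewb_run \<alpha> (Down io j r, V @ w, stack_of h fr, top_idx (stack_of h fr) - 1) (Up_target io r w h fr)"
proof -
  have top: "read_bound h fr + 2 \<le> top_idx (stack_of h fr)"
    using top_idx_stack_of[OF wf] by (auto split: list.splits)
  then have "min (top_idx (stack_of h fr) - 1 - 1) (read_bound h fr) = read_bound h fr" by simp
  with Down_run[OF wf ok j, of "top_idx (stack_of h fr) - 1" "V @ w"] top
  have down: "rewb_run \<alpha> (Down io j r, V @ w, stack_of h fr, top_idx (stack_of h fr) - 1)
      (case last_open j (take (read_bound h fr) h) of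
         None \<Rightarrow> (Up io r, V @ w, stack_of h fr, 0)
       | Some q \<Rightarrow> (Read io j r, V @ w, stack_of h fr, q + 3))"
    by simp
  show ?thesis
  proof (cases "last_open j (take (read_bound h fr) h)")
    case None
    with val have "V = []" by (simp add: ref_val_def)
    with down None Up_run[OF wf ok mk, of 0 w] show ?thesis by simp
  next
    case (Some q)
    with val read obtain p' where "p' \<le> read_bound h fr + 2"
      "rewb_run \<alpha> (Read io j r, V @ w, stack_of h fr, q + 3) (Up io r, w, stack_of h fr, p')"
      by (auto simp: ref_val_def)
    with down Some Up_run[OF wf ok mk, of p' w] show ?thesis by (simp add: rtranclp_trans)
  qed
qed

lemma Read_ref_run:
  assumes wf: "wf_frames h fr" and mk: "marked fr" and ok: "labels_ok \<alpha> h fr" and i: "i \<in> labels \<alpha>"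
    and n: "n < read_bound h fr" "h ! n = Num j" and j: "j \<in> labels \<alpha>" and V: "ref_val h j n = Some V"
    and nested: "\<And>q. last_open j (take n h) = Some q \<Longrightarrow> read_capture h j (Suc q) n = Some V \<Longrightarrow>
      \<exists>p' \<le> n + 2. rewb_run \<alpha> (Read io j r, V @ w, stack_of h ((i, n, True) # fr), q + 3)
        (Up io r, w, stack_of h ((i, n, True) # fr), p')"
  shows "rewb_run \<alpha> (Read io i r, V @ w, stack_of h fr, n + 2) (Read io i r, w, stack_of h fr, Suc n + 2)"
proof -
  let ?fr = "(i, n, True) # fr"
  have wf1: "wf_frames h ?fr" and mk1: "marked ?fr" and ok1: "labels_ok \<alpha> h ?fr"
    using wf mk ok i n by (auto simp: marked_def labels_ok_def)
  have nl: "n \<le> length h" using n read_bound_le[OF wf] by simp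
  have lt: "n + 2 < top_idx (stack_of h fr)" using top_idx_stack_of[OF wf] n by (auto split: list.splits)
  then have "stack_of h fr ! (n + 2) = hist_cell (Num j)" using stack_of_nth_eq_iff(3)[OF wf] n by simp
  moreover have "stack_of h fr ! (n + 2) \<in> cells_of (stack_syms \<alpha>)"
    using stack_of_nth_in_cells[OF ok wf] lt by simp
  ultimately have "trans_step (rewb_trans \<alpha>) (Read io i r, V @ w, stack_of h fr, n + 2) (Down io j r, V @ w, stack_of h ?fr, n + 3)"
    using io i j r lt less_length_stack_of[of "n + 2" h fr] stack_move_create[OF wf n(1)]
    by (intro rewb_trans_stepI[OF moves.read_ref]) (auto simp: short_acts_intros stack_syms_def)
  moreover have "rewb_run \<alpha> (Down io j r, V @ w, stack_of h ?fr, top_idx (stack_of h ?fr) - 1) (Up_target io r w h ?fr)"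
    using resolve_run[OF wf1 ok1 mk1 j] V nested by simp
  then have "rewb_run \<alpha> (Down io j r, V @ w, stack_of h ?fr, n + 3) (Pop io r, w, stack_of h ?fr, n + 3)"
    using top_idx_stack_of_Cons[OF nl, of i True fr] by (simp add: Up_target_def add.commute)
  moreover have "rewb_run \<alpha> (Pop io r, w, stack_of h ?fr, n + 3) (Read io i r, w, stack_of h fr, Suc n + 2)"
    using return_run[OF wf1 ok i, of w] by (simp add: numeral_3_eq_3)
  ultimately show ?thesis by (meson converse_rtranclp_into_rtranclp rtranclp_trans)
qed

lemma Read_run:
  "read_capture h i n m = Some R \<Longrightarrow> m = read_bound h fr \<Longrightarrow> wf_frames h fr \<Longrightarrow> marked fr \<Longrightarrow>
   labels_ok \<alpha> h fr \<Longrightarrow> i \<in> labels \<alpha> \<Longrightarrow>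
   \<exists>p' \<le> m + 2. rewb_run \<alpha> (Read io i r, R @ w, stack_of h fr, n + 2) (Up io r, w, stack_of h fr, p')"
proof (induct h i n m arbitrary: fr w R rule: read_capture.induct)
  case (1 h i n m)
  note IH = "1.hyps" and val = "1.prems"(1) and m = "1.prems"(2)
    and wf = "1.prems"(3) and mk = "1.prems"(4) and ok = "1.prems"(5) and i = "1.prems"(6)
  have nm: "n < m" and nl: "n < length h"
    using val by (auto simp: read_capture.simps[of h i n m] split: if_splits)
  then have nc: "\<not> (m \<le> n \<or> length h \<le> n)" by simp
  have lt: "n + 2 < top_idx (stack_of h fr)" using top_idx_stack_of[OF wf] nm m by (auto split: list.splits)
  then have le: "n + 2 \<le> top_idx (stack_of h fr)" by simp
  have cell: "stack_of h fr ! (n + 2) = hist_cell (h ! n)"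
    using stack_of_nth_eq_iff(3)[OF wf le] nm m by simp
  note facts = io i r lt less_length_stack_of[OF le] stack_of_nth_in_cells[OF ok wf le] cell
  have unfold: "read_capture h i n m = (case h ! n of
        Ch a \<Rightarrow> map_option ((#) a) (read_capture h i (Suc n) m)
      | Opn j \<Rightarrow> read_capture h i (Suc n) m
      | Cls j \<Rightarrow> (if j = i then Some [] else read_capture h i (Suc n) m)
      | Num j \<Rightarrow> opt_append (ref_val h j n) (read_capture h i (Suc n) m))"
    using read_capture_unfold[OF nm nl] .
  have continue: "rewb_run \<alpha> (Read io i r, R @ w, stack_of h fr, n + 2) (Up io r, w, stack_of h fr, p')"
    if "trans_step (rewb_trans \<alpha>) (Read io i r, R @ w, stack_of h fr, n + 2) (Read io i r, R' @ w, stack_of h fr, Suc n + 2)"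
      "rewb_run \<alpha> (Read io i r, R' @ w, stack_of h fr, Suc n + 2) (Up io r, w, stack_of h fr, p')" for R' p'
    using that by (rule converse_rtranclp_into_rtranclp)
  show ?case
  proof (cases "h ! n")
    case (Ch a)
    with val unfold obtain R' where R: "R = a # R'" "read_capture h i (Suc n) m = Some R'" by auto
    have "trans_step (rewb_trans \<alpha>) (Read io i r, R @ w, stack_of h fr, n + 2) (Read io i r, R' @ w, stack_of h fr, Suc n + 2)"
      using facts Ch R by (intro rewb_trans_stepI[OF moves.read_letter]) (auto simp: short_acts_intros)
    with IH(1)[OF nc Ch R(2) m wf mk ok i, of w] continue show ?thesis by blast
  next
    case (Opn j)
    with val unfold have R: "read_capture h i (Suc n) m = Some R" by simp
    have "trans_step (rewb_trans \<alpha>) (Read io i r, R @ w, stack_of h fr, n + 2) (Read io i r, R @ w, stack_of h fr, Suc n + 2)"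
      using facts Opn by (intro rewb_trans_stepI[OF moves.read_open]) (auto simp: short_acts_intros)
    with IH(2)[OF nc Opn R m wf mk ok i, of w] continue show ?thesis by blast
  next
    case (Cls j)
    show ?thesis
    proof (cases "j = i")
      case True
      with val unfold Cls have "R = []" by simp
      then have "trans_step (rewb_trans \<alpha>) (Read io i r, R @ w, stack_of h fr, n + 2) (Up io r, w, stack_of h fr, n + 2)"
        using facts Cls True by (intro rewb_trans_stepI[OF moves.read_end]) (auto simp: short_acts_intros)
      then show ?thesis using nm by (intro exI[of _ "n + 2"]) auto
    next
      case False
      with val unfold Cls have R: "read_capture h i (Suc n) m = Some R" by simp
      have "trans_step (rewb_trans \<alpha>) (Read io i r, R @ w, stack_of h fr, n + 2) (Read io i r, R @ w, stack_of h fr, Suc n + 2)"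
        using facts Cls False by (intro rewb_trans_stepI[OF moves.read_close]) (auto simp: short_acts_intros)
      with IH(3)[OF nc Cls False R m wf mk ok i, of w] continue show ?thesis by blast
    qed
  next
    case (Num j)
    with val unfold obtain V R2 where V: "ref_val h j n = Some V"
      and R2: "read_capture h i (Suc n) m = Some R2" and R: "R = V @ R2"
      by (auto simp: opt_append_eq_Some_iff)
    have "h ! n \<in> syms_of \<alpha>" using ok nl by (auto simp: labels_ok_def)
    with Num have j: "j \<in> labels \<alpha>" by (simp add: syms_of_def)
    have "rewb_run \<alpha> (Read io i r, V @ R2 @ w, stack_of h fr, n + 2) (Read io i r, R2 @ w, stack_of h fr, Suc n + 2)"
    proof (rule Read_ref_run[OF wf mk ok i _ Num j V])
      show "n < read_bound h fr" using nm m by simp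
      fix q assume "last_open j (take n h) = Some q" "read_capture h j (Suc q) n = Some V"
      with IH(4)[OF nc Num _ _ _ _ _ _ j, of q V "(i, n, True) # fr" "R2 @ w"] wf mk ok i nm m Num
      show "\<exists>p' \<le> n + 2. rewb_run \<alpha> (Read io j r, V @ R2 @ w, stack_of h ((i, n, True) # fr), q + 3)
          (Up io r, R2 @ w, stack_of h ((i, n, True) # fr), p')"
        by (simp add: numeral_3_eq_3 marked_def labels_ok_def)
    qed
    moreover obtain p' where "p' \<le> m + 2" "rewb_run \<alpha> (Read io i r, R2 @ w, stack_of h fr, Suc n + 2) (Up io r, w, stack_of h fr, p')"
      using IH(5)[OF nc Num R2 m wf mk ok i, of w] by blast
    ultimately have "rewb_run \<alpha> (Read io i r, V @ R2 @ w, stack_of h fr, n + 2) (Up io r, w, stack_of h fr, p')"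
      by (blast intro: rtranclp_trans)
    with \<open>p' \<le> m + 2\<close> R show ?thesis by auto
  qed
qed

end

lemma todo_step_syms: "todo_step r e r' \<Longrightarrow> r \<in> reachable_todos \<alpha> \<Longrightarrow> set e \<subseteq> syms_of \<alpha>"
  using todo_step_sym_labels by (fastforce simp: syms_of_def)

lemma top_sym_in_stack_syms: "set h \<subseteq> syms_of \<alpha> \<Longrightarrow> top_sym h \<in> stack_syms \<alpha>"
  by (cases h rule: rev_cases) (auto simp: top_sym_def stack_syms_def)

lemma deref_rec_append_SomeD:
  assumes "deref_rec (h @ h') = Some Z"
  shows "\<exists>Z1 Z2. deref_rec h = Some Z1 \<and> Z = Z1 @ Z2"
proof -
  have "deref_upto (h @ h') (length h + k) = Some Z \<Longrightarrow> \<exists>Z1 Z2. deref_rec h = Some Z1 \<and> Z = Z1 @ Z2" for k Z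
  proof (induct k arbitrary: Z)
    case 0
    then show ?case using deref_upto_append[of "length h" h h'] by (auto simp: deref_rec_def)
  next
    case (Suc k)
    then obtain Z' P where "deref_upto (h @ h') (length h + k) = Some Z'" "Z = Z' @ P"
      by (auto simp: opt_append_eq_Some_iff)
    then show ?case using Suc.hyps by fastforce
  qed
  from this[of "length h'"] assms show ?thesis by (simp add: deref_rec_def)
qed

lemma Gen_top_facts:
  assumes "set h \<subseteq> syms_of \<alpha>"
  shows "stack_of h [] ! Suc (length h) = SCell (top_sym h)"
    and "SCell (top_sym h) \<in> cells_of (stack_syms \<alpha>)"
    and "Suc (length h) < length (stack_of h [])"
    and "Suc (length h) \<le> top_idx (stack_of h [])"
  using stack_of_Nil_top[of h] top_sym_in_stack_syms[OF assms] top_idx_stack_of_Nil[of h]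
  by (auto simp: cells_of_def stack_of_Nil)

lemma Gen_ref_run:
  assumes step: "todo_step r [Num i] r'" and r: "r \<in> reachable_todos \<alpha>" and h: "set h \<subseteq> syms_of \<alpha>"
    and val: "ref_val h i (length h) = Some V"
  shows "rewb_run \<alpha> (Gen r, V @ w, stack_of h [], Suc (length h))
    (Gen r', w, stack_of (h @ [Num i]) [], Suc (length (h @ [Num i])))"
proof -
  have r': "r' \<in> reachable_todos \<alpha>" using todo_step_reachable[OF r step] .
  have i: "i \<in> labels \<alpha>" using todo_step_sym_labels[OF step r] by simp
  have ok: "labels_ok \<alpha> h []" using h by (simp add: labels_ok_def)
  have top: "top_idx (stack_of h []) - 1 = Suc (length h)" by (simp add: top_idx_stack_of_Nil)
  have acts: "AStay \<in> short_acts (stack_syms \<alpha>)" "AReplace [top_sym h, Hist (Num i)] \<in> short_acts (stack_syms \<alpha>)"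
    using top_sym_in_stack_syms[OF h] i by (auto simp: short_acts_def stack_syms_def syms_of_def)
  have read: "\<exists>p' \<le> length h + 2. rewb_run \<alpha> (Read i i r', V @ w, stack_of h [], q + 3) (Up i r', w, stack_of h [], p')"
    if "read_capture h i (Suc q) (length h) = Some V" for q
    using Read_run[OF i r' that, where fr = "[]" and w = w] ok i by (simp add: marked_def numeral_3_eq_3)
  note top_facts = Gen_top_facts[OF h]
  have "trans_step (rewb_trans \<alpha>) (Gen r, V @ w, stack_of h [], Suc (length h)) (Down i i r', V @ w, stack_of h [], Suc (length h))"
    by (rule rewb_trans_stepI[OF moves.gen_ref[OF step] _ _ top_facts(2) acts(1) top_facts(1,3)])
      (use r r' i top_facts(4) in simp_all)
  moreover have "rewb_run \<alpha> (Down i i r', V @ w, stack_of h [], top_idx (stack_of h []) - 1) (Up_target i r' w h [])"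
  proof (rule resolve_run[OF i r' _ ok _ i])
    show "wf_frames h []" "marked []" by (simp_all add: marked_def)
    show "ref_val h i (read_bound h []) = Some V" using val by simp
    fix q assume "read_capture h i (Suc q) (read_bound h []) = Some V"
    then show "\<exists>p' \<le> read_bound h [] + 2. rewb_run \<alpha> (Read i i r', V @ w, stack_of h [], q + 3) (Up i r', w, stack_of h [], p')"
      using read by simp
  qed
  moreover have "trans_step (rewb_trans \<alpha>) (Push i r', w, stack_of h [], Suc (length h))
      (Gen r', w, stack_of (h @ [Num i]) [], Suc (length (h @ [Num i])))"
    by (rule rewb_trans_stepI[OF moves.push _ _ top_facts(2) acts(2) top_facts(1,3) _ _ stack_move_push])
      (use r' i in simp_all)
  ultimately show ?thesis using top by (simp add: Up_target_def)
qed

lemma Gen_step_run: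
  assumes step: "todo_step r e r'" and r: "r \<in> reachable_todos \<alpha>" and h: "set h \<subseteq> syms_of \<alpha>"
    and val: "deref_rec h = Some X" "deref_rec (h @ e) = Some (X @ Y)"
  shows "rewb_run \<alpha> (Gen r, Y @ w, stack_of h [], Suc (length h)) (Gen r', w, stack_of (h @ e) [], Suc (length (h @ e)))"
proof -
  have r': "r' \<in> reachable_todos \<alpha>" using todo_step_reachable[OF r step] .
  note top_facts = Gen_top_facts[OF h]
  consider "e = []" | x where "e = [x]"
    using todo_step_length[OF step] by (cases e) auto
  then show ?thesis
  proof cases
    case 1
    with val have "Y = []" by simp
    with 1 have "trans_step (rewb_trans \<alpha>) (Gen r, Y @ w, stack_of h [], Suc (length h)) (Gen r', w, stack_of (h @ e) [], Suc (length (h @ e)))"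
      by (intro rewb_trans_stepI[OF moves.gen_silent[OF step[unfolded 1]] _ _ top_facts(2) _ top_facts(1,3)])
        (use r r' top_facts(4) in \<open>simp_all add: short_acts_intros\<close>)
    then show ?thesis by (rule r_into_rtranclp)
  next
    case (2 x)
    then have x: "x \<in> syms_of \<alpha>" using todo_step_syms[OF step r] by simp
    have act: "AReplace [top_sym h, Hist x] \<in> short_acts (stack_syms \<alpha>)"
      using top_sym_in_stack_syms[OF h] x by (simp add: short_acts_intros stack_syms_def)
    have val_x: "opt_append (Some X) (sym_val (h @ [x]) (length h)) = Some (X @ Y)"
      using deref_rec_snoc[of h x] val 2 by simp
    note step' = step[unfolded 2]
    show ?thesis
    proof (cases x)
      case (Ch a)
      with val_x have Y: "Y = [a]" by (simp add: sym_val_snoc)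
      have "trans_step (rewb_trans \<alpha>) (Gen r, a # w, stack_of h [], Suc (length h))
          (Gen r', w, stack_of (h @ [Ch a]) [], Suc (length (h @ [Ch a])))"
        using act Ch by (intro rewb_trans_stepI[OF moves.gen_letter[OF step'[unfolded Ch]] _ _ top_facts(2) _
            top_facts(1,3) _ _ stack_move_push]) (use r r' in simp_all)
      with 2 Ch Y show ?thesis by simp
    next
      case (Opn j)
      with val_x have Y: "Y = []" by (simp add: sym_val_snoc)
      have "trans_step (rewb_trans \<alpha>) (Gen r, w, stack_of h [], Suc (length h))
          (Gen r', w, stack_of (h @ [Opn j]) [], Suc (length (h @ [Opn j])))"
        using act Opn by (intro rewb_trans_stepI[OF moves.gen_open[OF step'[unfolded Opn]] _ _ top_facts(2) _
            top_facts(1,3) _ _ stack_move_push]) (use r r' in simp_all)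
      with 2 Opn Y show ?thesis by simp
    next
      case (Cls j)
      with val_x have Y: "Y = []" by (simp add: sym_val_snoc)
      have "trans_step (rewb_trans \<alpha>) (Gen r, w, stack_of h [], Suc (length h))
          (Gen r', w, stack_of (h @ [Cls j]) [], Suc (length (h @ [Cls j])))"
        using act Cls by (intro rewb_trans_stepI[OF moves.gen_close[OF step'[unfolded Cls]] _ _ top_facts(2) _
            top_facts(1,3) _ _ stack_move_push]) (use r r' in simp_all)
      with 2 Cls Y show ?thesis by simp
    next
      case (Num i)
      with val_x have "ref_val h i (length h) = Some Y" by (auto simp: sym_val_snoc opt_append_eq_Some_iff)
      with 2 Num show ?thesis using Gen_ref_run[OF step'[unfolded Num] r h] by simp
    qed
  qed
qed

lemma Gen_run:
  "todo_steps r u r' \<Longrightarrow> r \<in> reachable_todos \<alpha> \<Longrightarrow> set h \<subseteq> syms_of \<alpha> \<Longrightarrow>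
   deref_rec h = Some X \<Longrightarrow> deref_rec (h @ u) = Some (X @ Y) \<Longrightarrow>
   rewb_run \<alpha> (Gen r, Y @ w, stack_of h [], Suc (length h)) (Gen r', w, stack_of (h @ u) [], Suc (length (h @ u)))"
proof (induct arbitrary: h X Y rule: todo_steps.induct)
  case (steps_step r e r1 u r'')
  let ?h = "h @ e"
  obtain Z1 Z2 where Z: "deref_rec ?h = Some Z1" "X @ Y = Z1 @ Z2"
    using deref_rec_append_SomeD[of ?h u] steps_step.prems(4) by auto
  obtain Z0 Y1 where "deref_rec h = Some Z0" "Z1 = Z0 @ Y1" using deref_rec_append_SomeD[OF Z(1)] by blast
  with Z steps_step.prems(3) have Y1: "deref_rec ?h = Some (X @ Y1)" "Y = Y1 @ Z2" by auto
  have r1: "r1 \<in> reachable_todos \<alpha>" using todo_step_reachable[OF steps_step.prems(1) steps_step.hyps(1)] .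
  have h1: "set ?h \<subseteq> syms_of \<alpha>" using steps_step.prems(1,2) todo_step_syms[OF steps_step.hyps(1)] by auto
  have "rewb_run \<alpha> (Gen r, Y1 @ Z2 @ w, stack_of h [], Suc (length h)) (Gen r1, Z2 @ w, stack_of ?h [], Suc (length ?h))"
    using Gen_step_run[OF steps_step.hyps(1) steps_step.prems(1-3) Y1(1)] .
  moreover have "rewb_run \<alpha> (Gen r1, Z2 @ w, stack_of ?h [], Suc (length ?h)) (Gen r'', w, stack_of (?h @ u) [], Suc (length (?h @ u)))"
    using steps_step.hyps(3)[OF r1 h1 Y1(1)] steps_step.prems(4) Y1(2) by simp
  ultimately show ?case using Y1(2) by (simp add: rtranclp_trans)
qed simp

theorem rewb_lang_subset_trans_lang: "rewb_lang \<alpha> \<subseteq> trans_lang (rewb_trans \<alpha>) (Gen [Exp \<alpha>]) Base {Gen []}"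
proof
  fix w0 assume "w0 \<in> rewb_lang \<alpha>"
  then obtain v where "todo_steps [Exp \<alpha>] v []" "deref_rec v = Some w0"
    unfolding rewb_lang_def todo_steps_iff_rlang deref_eq_deref_rec by blast
  from Gen_run[OF this(1) init_in_reachable_todos, of "[]" "[]" w0 "[]"] this(2)
  have "rewb_run \<alpha> (Gen [Exp \<alpha>], w0, stack_of [] [], 1) (Gen [], [], stack_of v [], Suc (length v))"
    by (simp add: deref_rec_def)
  then show "w0 \<in> trans_lang (rewb_trans \<alpha>) (Gen [Exp \<alpha>]) Base {Gen []}"
    unfolding trans_lang_def by (auto simp: stack_of_Nil)
qed

theorem nsa_lang_rewb_nsa: "nsa_lang (rewb_nsa \<alpha>) = rewb_lang \<alpha>"
  using nsa_lang_rewb_nsa_trans_lang trans_lang_rewb_trans_subset rewb_lang_subset_trans_lang by blast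

theorem theorem1:
  fixes \<alpha> :: "('a::finite) rewb" and k :: nat
  assumes "rewb_k k \<alpha>"
  shows "\<exists>A :: 'a nsa. is_nsa A \<and> nsa_lang A = rewb_lang \<alpha>"
  using is_nsa_rewb_nsa nsa_lang_rewb_nsa by blast

end
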